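(* Let $\Omega$ be a classical Cartan domain of rank $r$ (setup below). Then its Shilov boundary is \[S_\Omega=\Big\{z\in\mathbb C^d:\ \Delta^{(\ell)}(z,z)=\binom{r}{\ell}\ \text{ for all } 1\le \ell\le r\Big\}.\]
   Context: Let $\Omega\subset\mathbb C^d$ be a classical (irreducible) Cartan domain of rank $r$ in its Harish-Chandra realization, viewed as the open unit ball of a Cartan factor $Z\cong\mathbb C^d$. Let $G$ be the identity component of $\mathrm{Aut}(\Omega)$ and $\mathbb K=\{g\in G: g(0)=0\}$; $\mathbb K$ consists of linear maps and so acts on all of $\mathbb C^d$. There is a Jordan frame $e_1,\dots,e_r$ (pairwise orthogonal minimal tripotents) such that every $z\in\mathbb C^d$ has a polar decomposition $z=k\cdot\sum_{j=1}^r t_je_j$ with $k\in\mathbb K$ and uniquely determined singular numbers $t_1\ge\dots\ge t_r\ge 0$; the spectral norm is $\|z\|=t_1$ and $\Omega=\{z:\|z\|<1\}$. The Shilov boundary of $\Omega$ is $S_\Omega=\{k\cdot e: k\in\mathbb K\}$ where $e=e_1+\dots+e_r$. The Jordan triple determinant $\Delta(z,w)$ is the unique $\mathbb K$-invariant sesqui-analytic polynomial (holomorphic in $z$, antiholomorphic in $w$) with $\Delta(z,z)=\prod_{j=1}^r(1-t_j^2)$. Write $\Delta(z,w)=\sum_{\ell=0}^r(-1)^\ell\Delta^{(\ell)}(z,w)$, where $\Delta^{(\ell)}$ is a sesqui-analytic polynomial homogeneous of bidegree $(\ell,\ell)$ (and $\Delta^{(0)}=1$). *)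

theory Defs
  imports "Jordan_Normal_Form.Determinant" "HOL-Computational_Algebra.Polynomial"
begin

(* Elements of the Cartan factor Z are represented as complex
   matrices of fixed dimensions (type IV: column vectors, i.e. n x 1 matrices). *)

datatype cartan_type =
    TypeI nat nat
  | TypeII nat
  | TypeIII nat
  | TypeIV nat       (* IV_n: Lie ball in C^n, n >= 3 *)

fun valid_cartan :: "cartan_type \<Rightarrow> bool" where
  "valid_cartan (TypeI m n) = (1 \<le> m \<and> m \<le> n)"
| "valid_cartan (TypeII n) = (2 \<le> n)"
| "valid_cartan (TypeIII n) = (1 \<le> n)"
| "valid_cartan (TypeIV n) = (3 \<le> n)"

(* the underlying complex vector space Z = C^d *)
fun cartan_space :: "cartan_type \<Rightarrow> complex mat set" where
  "cartan_space (TypeI m n) = carrier_mat m n"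
| "cartan_space (TypeII n) = {z \<in> carrier_mat n n. transpose_mat z = - z}"
| "cartan_space (TypeIII n) = {z \<in> carrier_mat n n. transpose_mat z = z}"
| "cartan_space (TypeIV n) = carrier_mat n 1"

fun cartan_rank :: "cartan_type \<Rightarrow> nat" where
  "cartan_rank (TypeI m n) = m"
| "cartan_rank (TypeII n) = n div 2"
| "cartan_rank (TypeIII n) = n"
| "cartan_rank (TypeIV n) = 2"

definition adj :: "complex mat \<Rightarrow> complex mat" where
  "adj z = mat (dim_col z) (dim_row z) (\<lambda>(i,j). cnj (z $$ (j,i)))"

definition unitary_mat :: "nat \<Rightarrow> complex mat \<Rightarrow> bool" where
  "unitary_mat n U \<longleftrightarrow> U \<in> carrier_mat n n \<and> U * adj U = 1\<^sub>m n"

definition SO_mat :: "nat \<Rightarrow> complex mat \<Rightarrow> bool" where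
  "SO_mat n A \<longleftrightarrow> (\<exists>B :: real mat. B \<in> carrier_mat n n \<and> B * transpose_mat B = 1\<^sub>m n
                      \<and> det B = 1 \<and> A = map_mat complex_of_real B)"

(* K = identity component of the isotropy group of 0 in Aut(Omega), acting linearly *)
fun cartan_K :: "cartan_type \<Rightarrow> (complex mat \<Rightarrow> complex mat) set" where
  "cartan_K (TypeI m n) = {(\<lambda>z. U * z * V) | U V. unitary_mat m U \<and> unitary_mat n V}"
| "cartan_K (TypeII n) = {(\<lambda>z. U * z * transpose_mat U) | U. unitary_mat n U}"
| "cartan_K (TypeIII n) = {(\<lambda>z. U * z * transpose_mat U) | U. unitary_mat n U}"
| "cartan_K (TypeIV n) = {(\<lambda>z. c \<cdot>\<^sub>m (A * z)) | c A. cmod c = 1 \<and> SO_mat n A}"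

(* the maximal tripotent e = e_1 + ... + e_r of the standard Jordan frame *)
fun cartan_e :: "cartan_type \<Rightarrow> complex mat" where
  "cartan_e (TypeI m n) = mat m n (\<lambda>(i,j). if i = j then 1 else 0)"
| "cartan_e (TypeII n) = mat n n (\<lambda>(i,j). if even i \<and> j = i + 1 then 1
                                         else if even j \<and> i = j + 1 then -1 else 0)"
| "cartan_e (TypeIII n) = 1\<^sub>m n"
| "cartan_e (TypeIV n) = mat n 1 (\<lambda>(i,j). if i = 0 then 1 else 0)"

definition shilov_boundary :: "cartan_type \<Rightarrow> complex mat set" where
  "shilov_boundary C = {k (cartan_e C) | k. k \<in> cartan_K C}"

definition qform :: "complex mat \<Rightarrow> complex" where
  "qform z = (\<Sum>i<dim_row z. (z $$ (i,0))\<^sup>2)"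

definition sesq :: "complex mat \<Rightarrow> complex mat \<Rightarrow> complex" where
  "sesq z w = (\<Sum>i<dim_row z. z $$ (i,0) * cnj (w $$ (i,0)))"

(* Delta_poly C z w is the polynomial  lambda |-> Delta(lambda z, w)
   of the Jordan triple determinant Delta. *)
fun Delta_poly :: "cartan_type \<Rightarrow> complex mat \<Rightarrow> complex mat \<Rightarrow> complex poly" where
  "Delta_poly (TypeI m n) z w =
     (THE p. \<forall>a. poly p a = det (1\<^sub>m m - (a \<cdot>\<^sub>m z) * adj w))"
| "Delta_poly (TypeII n) z w =
     (THE p. poly p 0 = 1 \<and> (\<forall>a. (poly p a)\<^sup>2 = det (1\<^sub>m n - (a \<cdot>\<^sub>m z) * adj w)))"
| "Delta_poly (TypeIII n) z w =
     (THE p. \<forall>a. poly p a = det (1\<^sub>m n - (a \<cdot>\<^sub>m z) * adj w))"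
| "Delta_poly (TypeIV n) z w = [:1, - 2 * sesq z w, qform z * cnj (qform w):]"

definition Delta :: "cartan_type \<Rightarrow> complex mat \<Rightarrow> complex mat \<Rightarrow> complex" where
  "Delta C z w = poly (Delta_poly C z w) 1"

(* Delta^(l)(z,w): the bihomogeneous component of bidegree (l,l), with sign
   convention Delta = sum_l (-1)^l Delta^(l).  Since Delta(lambda z, w) =
   sum_l (-1)^l lambda^l Delta^(l)(z,w), it is (-1)^l times the l-th coefficient. *)
definition Delta_comp :: "cartan_type \<Rightarrow> nat \<Rightarrow> complex mat \<Rightarrow> complex mat \<Rightarrow> complex" where
  "Delta_comp C l z w = (-1)^l * coeff (Delta_poly C z w) l"

end

theory Submission
  imports Defs "Jordan_Normal_Form.Char_Poly"
begin

text \<open>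
  For the domains of type I, II and III every \<open>z\<close> has a normal form under \<open>K\<close>: the singular value
  decomposition \<open>z = U D V\<close> (type I), Takagi's factorization \<open>z = U D U\<^sup>T\<close> of a symmetric matrix
  (type III) and Youla's decomposition \<open>z = U Y U\<^sup>T\<close> of a skew-symmetric matrix into \<open>2 \<times> 2\<close> blocks
  (type II). All three are proved by deflation: a singular pair of \<open>z\<close>, completed to orthonormal
  bases, splits off one singular value (or one \<open>2 \<times> 2\<close> block). On a normal form with singular numbers
  \<open>s\<^sub>j\<close> the polynomial \<open>\<lambda> \<mapsto> \<Delta>(\<lambda> z, z)\<close> is \<open>\<Prod>\<^sub>j (1 - \<lambda> s\<^sub>j\<^sup>2)\<close>, so the conditions on its coefficients
  \<open>\<Delta>\<^sup>(\<^sup>\<ell>\<^sup>)(z,z)\<close> say that it equals \<open>(1 - \<lambda>)\<^sup>r\<close>, i.e. that all \<open>s\<^sub>j\<close> are \<open>1\<close>, i.e. that \<open>z = k e\<close>.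

  For the Lie ball (type IV), \<open>\<Delta>(\<lambda> z, z) = 1 - 2 \<lambda> \<langle>z,z\<rangle> + \<lambda>\<^sup>2 \<bar>q z\<bar>\<^sup>2\<close>, and \<open>\<langle>z,z\<rangle> = \<bar>q z\<bar> = 1\<close>
  forces \<open>z = c x\<close> with \<open>\<bar>c\<bar> = 1\<close> and \<open>x\<close> a real unit vector; a Householder reflection, corrected to
  determinant \<open>1\<close>, is a rotation mapping the first basis vector to \<open>x\<close>.
\<close>

section \<open>Conjugate transpose and unitary matrices\<close>

lemma adj_dim[simp]: "dim_row (adj A) = dim_col A" "dim_col (adj A) = dim_row A"
  by (auto simp: adj_def)

lemma adj_carrier_mat[simp]: "A \<in> carrier_mat m n \<Longrightarrow> adj A \<in> carrier_mat n m"
  by (metis adj_dim carrier_matD carrier_matI)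

lemma adj_index[simp]: "i < dim_col A \<Longrightarrow> j < dim_row A \<Longrightarrow> adj A $$ (i,j) = cnj (A $$ (j,i))"
  by (auto simp: adj_def)

lemma adj_adj[simp]: "adj (adj A) = A"
  by (rule eq_matI) auto

lemma adj_one[simp]: "adj (1\<^sub>m n) = 1\<^sub>m n"
  by (rule eq_matI) auto

lemma adj_zero[simp]: "adj (0\<^sub>m m n) = 0\<^sub>m n m"
  by (rule eq_matI) auto

lemma adj_mult:
  assumes A: "A \<in> carrier_mat m k" and B: "B \<in> carrier_mat k n"
  shows "adj (A * B) = adj B * adj A"
proof (rule eq_matI)
  fix i j assume "i < dim_row (adj B * adj A)" "j < dim_col (adj B * adj A)"
  then have i: "i < n" and j: "j < m" using A B by auto
  have "adj (A * B) $$ (i,j) = cnj (\<Sum>l<k. A $$ (j,l) * B $$ (l,i))"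
    using A B i j by (auto simp: scalar_prod_def lessThan_atLeast0)
  also have "\<dots> = (\<Sum>l<k. adj B $$ (i,l) * adj A $$ (l,j))"
    using A B i j by (auto simp: cnj_sum mult.commute intro!: sum.cong)
  also have "\<dots> = (adj B * adj A) $$ (i,j)"
    using A B i j by (auto simp: scalar_prod_def lessThan_atLeast0)
  finally show "adj (A * B) $$ (i,j) = (adj B * adj A) $$ (i,j)" .
qed (use A B in auto)

lemma adj_transpose: "adj (transpose_mat A) = map_mat cnj A"
  by (rule eq_matI) auto

lemma transpose_adj: "transpose_mat (adj A) = map_mat cnj A"
  by (rule eq_matI) auto

lemma adj_map_cnj: "adj (map_mat cnj A) = transpose_mat A"
  by (rule eq_matI) auto

lemma map_cnj_mult:
  assumes "A \<in> carrier_mat m k" "B \<in> carrier_mat k n"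
  shows "map_mat cnj (A * B) = map_mat cnj A * map_mat cnj B"
  by (rule eq_matI) (use assms in \<open>auto simp: scalar_prod_def cnj_sum\<close>)

lemma adj_four_block:
  assumes "A \<in> carrier_mat n1 m1" "B \<in> carrier_mat n1 m2" "C \<in> carrier_mat n2 m1" "D \<in> carrier_mat n2 m2"
  shows "adj (four_block_mat A B C D) = four_block_mat (adj A) (adj C) (adj B) (adj D)"
  by (rule eq_matI) (use assms in auto)

lemma unitary_carrier: "unitary_mat n U \<Longrightarrow> U \<in> carrier_mat n n"
  by (simp add: unitary_mat_def)

lemma unitary_one: "unitary_mat n (1\<^sub>m n)"
  by (simp add: unitary_mat_def)

lemma unitary_adj_mult: "unitary_mat n U \<Longrightarrow> adj U * U = 1\<^sub>m n"
  using mat_mult_left_right_inverse[of U n "adj U"] by (auto simp: unitary_mat_def)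

lemma unitary_adj: "unitary_mat n U \<Longrightarrow> unitary_mat n (adj U)"
  using unitary_adj_mult[of n U] by (auto simp: unitary_mat_def)

lemma unitary_mult:
  assumes U: "unitary_mat n U" and V: "unitary_mat n V"
  shows "unitary_mat n (U * V)"
proof -
  have cU: "U \<in> carrier_mat n n" and cV: "V \<in> carrier_mat n n"
    using U V by (auto simp: unitary_mat_def)
  have "U * V * adj (U * V) = U * (V * adj V) * adj U"
    using cU cV by (simp add: adj_mult[OF cU cV] assoc_mult_mat[of _ n n _ n _ n])
      (metis adj_carrier_mat assoc_mult_mat mult_carrier_mat)
  also have "\<dots> = 1\<^sub>m n"
    using U V cU by (simp add: unitary_mat_def)
  finally show ?thesis
    using cU cV by (simp add: unitary_mat_def)
qed

lemma unitary_transpose: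
  assumes U: "unitary_mat n U"
  shows "unitary_mat n (transpose_mat U)"
proof -
  have cU: "U \<in> carrier_mat n n" using U by (rule unitary_carrier)
  have "transpose_mat U * adj (transpose_mat U) = transpose_mat (adj U * U)"
    by (simp add: adj_transpose transpose_mult[of "adj U" n n U n] cU transpose_adj)
  then show ?thesis
    using cU unitary_adj_mult[OF U] by (simp add: unitary_mat_def)
qed

lemma unitary_map_cnj:
  assumes U: "unitary_mat n U"
  shows "unitary_mat n (map_mat cnj U)"
proof -
  have cU: "U \<in> carrier_mat n n" using U by (rule unitary_carrier)
  have "adj (map_mat cnj U) = map_mat cnj (adj U)"
    by (rule eq_matI) auto
  then have "map_mat cnj U * adj (map_mat cnj U) = map_mat cnj U * map_mat cnj (adj U)"
    by simp
  also have "\<dots> = map_mat cnj (U * adj U)"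
    using cU by (simp add: map_cnj_mult[of _ n n _ n])
  finally show ?thesis
    using U cU by (auto simp: unitary_mat_def)
qed

lemma unitary_four_block:
  assumes A: "unitary_mat n1 A" and B: "unitary_mat n2 B"
  shows "unitary_mat (n1 + n2) (four_block_mat A (0\<^sub>m n1 n2) (0\<^sub>m n2 n1) B)"
proof -
  have cA: "A \<in> carrier_mat n1 n1" and cB: "B \<in> carrier_mat n2 n2"
    using A B by (auto simp: unitary_mat_def)
  have "four_block_mat A (0\<^sub>m n1 n2) (0\<^sub>m n2 n1) B * adj (four_block_mat A (0\<^sub>m n1 n2) (0\<^sub>m n2 n1) B)
      = four_block_mat (A * adj A) (0\<^sub>m n1 n2) (0\<^sub>m n2 n1) (B * adj B)"
    using cA cB by (simp add: adj_four_block[OF cA _ _ cB] mult_four_block_mat[of _ n1 n1 _ n2 _ n2 _ _ n1 _ n2])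
  then show ?thesis
    using A B cA cB by (auto simp: unitary_mat_def)
qed

section \<open>Orthonormal frames\<close>

lemma cscalar_expand:
  fixes x y :: "complex vec"
  shows "dim_vec y = dim_vec x \<Longrightarrow> x \<bullet>c y = (\<Sum>i<dim_vec x. x $ i * cnj (y $ i))"
  by (simp add: scalar_prod_def lessThan_atLeast0)

lemma cscalar_smult_left:
  fixes x y :: "complex vec"
  shows "dim_vec y = dim_vec x \<Longrightarrow> (c \<cdot>\<^sub>v x) \<bullet>c y = c * (x \<bullet>c y)"
  by (simp add: cscalar_expand sum_distrib_left algebra_simps)

lemma cscalar_smult_right:
  fixes x y :: "complex vec"
  shows "dim_vec y = dim_vec x \<Longrightarrow> x \<bullet>c (c \<cdot>\<^sub>v y) = cnj c * (x \<bullet>c y)"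
  by (simp add: cscalar_expand sum_distrib_left algebra_simps)

lemma cscalar_swap:
  fixes x y :: "complex vec"
  shows "dim_vec y = dim_vec x \<Longrightarrow> x \<bullet>c y = cnj (y \<bullet>c x)"
  by (simp add: cscalar_expand cnj_sum mult.commute)

lemma cscalar_conjugate:
  fixes x y :: "complex vec"
  shows "dim_vec y = dim_vec x \<Longrightarrow> conjugate x \<bullet>c conjugate y = y \<bullet>c x"
  by (simp add: scalar_prod_def lessThan_atLeast0 mult.commute)

lemma cscalar_adj:
  fixes A :: "complex mat"
  assumes A: "A \<in> carrier_mat m n" and x: "x \<in> carrier_vec n" and y: "y \<in> carrier_vec m"
  shows "(A *\<^sub>v x) \<bullet>c y = x \<bullet>c (adj A *\<^sub>v y)"
proof -
  have "(A *\<^sub>v x) \<bullet>c y = (\<Sum>i<m. (\<Sum>j<n. A $$ (i,j) * x $ j) * cnj (y $ i))"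
    using A x y by (simp add: cscalar_expand scalar_prod_def lessThan_atLeast0)
  also have "\<dots> = (\<Sum>j<n. x $ j * cnj (\<Sum>i<m. cnj (A $$ (i,j)) * y $ i))"
    by (simp add: sum_distrib_left sum_distrib_right cnj_sum algebra_simps sum.swap[of _ "{..<m}"])
  also have "\<dots> = x \<bullet>c (adj A *\<^sub>v y)"
    using A x y by (simp add: cscalar_expand scalar_prod_def lessThan_atLeast0)
  finally show ?thesis .
qed

lemma smult_zero_vec[simp]: "(k :: 'a :: mult_zero) \<cdot>\<^sub>v 0\<^sub>v n = 0\<^sub>v n"
  by (rule eq_vecI) auto

lemma zero_smult_vec[simp]: "v \<in> carrier_vec n \<Longrightarrow> (0 :: 'a :: mult_zero) \<cdot>\<^sub>v v = 0\<^sub>v n"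
  by (rule eq_vecI) auto

definition norm2_vec :: "complex vec \<Rightarrow> real" where
  "norm2_vec x = (\<Sum>i<dim_vec x. (cmod (x $ i))\<^sup>2)"

lemma cscalar_self: "x \<bullet>c x = complex_of_real (norm2_vec x)"
  by (simp add: cscalar_expand norm2_vec_def complex_mult_cnj cmod_power2)

lemma norm2_vec_pos: "x \<in> carrier_vec n \<Longrightarrow> x \<noteq> 0\<^sub>v n \<Longrightarrow> norm2_vec x > 0"
  using conjugate_square_greater_0_vec[of x n] by (simp add: cscalar_self less_complex_def)

lemma exists_unit_multiple:
  assumes x: "x \<in> carrier_vec n" "x \<noteq> 0\<^sub>v n"
  shows "\<exists>c::real. c > 0 \<and> (complex_of_real c \<cdot>\<^sub>v x) \<bullet>c (complex_of_real c \<cdot>\<^sub>v x) = 1"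
proof -
  have pos: "norm2_vec x > 0" using norm2_vec_pos[OF x] .
  define c where "c = 1 / sqrt (norm2_vec x)"
  have "(complex_of_real c \<cdot>\<^sub>v x) \<bullet>c (complex_of_real c \<cdot>\<^sub>v x) = complex_of_real c * complex_of_real c * (x \<bullet>c x)"
    by (simp add: cscalar_smult_left cscalar_smult_right)
  also have "\<dots> = 1" using pos by (simp add: c_def cscalar_self flip: of_real_mult)
  finally show ?thesis using pos by (intro exI[of _ c]) (simp add: c_def)
qed

lemma exists_orthogonal_vec:
  fixes vs :: "complex vec list"
  assumes k: "length vs < n" and vs: "set vs \<subseteq> carrier_vec n"
  shows "\<exists>x \<in> carrier_vec n. x \<noteq> 0\<^sub>v n \<and> (\<forall>v\<in>set vs. x \<bullet>c v = 0)"
proof -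
  let ?k = "length vs"
  define c where "c i = (if i < ?k then conjugate (vs ! i) else 0\<^sub>v n)" for i
  define A where "A = mat\<^sub>r n n (\<lambda>i. if i = ?k then 0\<^sub>v n else c i)"
  have A: "A \<in> carrier_mat n n" unfolding A_def by auto
  have "c i \<in> carrier_vec n" for i
    using vs nth_mem[of i vs] by (auto simp: c_def subset_iff)
  then have "det A = 0"
    unfolding A_def by (intro det_row_0[OF k]) auto
  then obtain x where x: "x \<in> carrier_vec n" "x \<noteq> 0\<^sub>v n" "A *\<^sub>v x = 0\<^sub>v n"
    using det_0_iff_vec_prod_zero[OF A] by auto
  have "x \<bullet>c v = 0" if v: "v \<in> set vs" for v
  proof -
    obtain i where i: "i < ?k" "v = vs ! i" using v by (auto simp: in_set_conv_nth)
    have "v \<in> carrier_vec n" using vs v by auto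
    then have "x \<bullet>c v = (A *\<^sub>v x) $ i"
      using i k x(1) unfolding A_def c_def by (simp add: conjugate_vec_sprod_comm)
    then show ?thesis using x(3) i k by simp
  qed
  then show ?thesis using x by auto
qed

definition orthonormal :: "nat \<Rightarrow> complex vec list \<Rightarrow> bool" where
  "orthonormal n vs \<longleftrightarrow> set vs \<subseteq> carrier_vec n \<and> distinct vs \<and>
     (\<forall>x\<in>set vs. \<forall>y\<in>set vs. x \<bullet>c y = (if x = y then 1 else 0))"

lemma orthonormal_nth:
  assumes "orthonormal n vs" "i < length vs" "j < length vs"
  shows "vs ! i \<bullet>c vs ! j = (if i = j then 1 else 0)"
  using assms unfolding orthonormal_def by (auto simp: nth_eq_iff_index_eq)

lemma orthonormal_Cons_nth:
  assumes o: "orthonormal n (u # us)" and i: "i < Suc (length us)"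
  shows "(u # us) ! i \<in> carrier_vec n" "u \<bullet>c (u # us) ! i = (if i = 0 then 1 else 0)"
    "(u # us) ! i \<bullet>c u = (if i = 0 then 1 else 0)"
  using o nth_mem[of i "u # us"] i orthonormal_nth[OF o, of 0 i] orthonormal_nth[OF o, of i 0]
  by (auto simp: orthonormal_def simp del: nth_mem)

lemma orthonormal_snoc:
  assumes us: "orthonormal n us" and x: "x \<in> carrier_vec n" "x \<bullet>c x = 1"
    and orth: "\<forall>v\<in>set us. x \<bullet>c v = 0"
  shows "orthonormal n (us @ [x])"
proof -
  have "v \<bullet>c x = 0" if "v \<in> set us" for v
    using that us x orth cscalar_swap[of x v] by (force simp: orthonormal_def)
  moreover have "x \<notin> set us" using x orth by force
  ultimately show ?thesis using us x orth unfolding orthonormal_def by auto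
qed

lemma orthonormal_extend:
  assumes "orthonormal n us" "length us \<le> n"
  shows "\<exists>ws. orthonormal n (us @ ws) \<and> length (us @ ws) = n"
  using assms
proof (induct "n - length us" arbitrary: us)
  case 0
  then show ?case by (intro exI[of _ "[]"]) auto
next
  case (Suc d)
  then have lt: "length us < n" and sub: "set us \<subseteq> carrier_vec n"
    by (auto simp: orthonormal_def)
  obtain x where x: "x \<in> carrier_vec n" "x \<noteq> 0\<^sub>v n" "\<forall>v\<in>set us. x \<bullet>c v = 0"
    using exists_orthogonal_vec[OF lt sub] by auto
  obtain c where c: "(complex_of_real c \<cdot>\<^sub>v x) \<bullet>c (complex_of_real c \<cdot>\<^sub>v x) = 1"
    using exists_unit_multiple[OF x(1,2)] by auto
  have "orthonormal n (us @ [complex_of_real c \<cdot>\<^sub>v x])"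
    using x c sub by (intro orthonormal_snoc[OF Suc(3)]) (auto simp: cscalar_smult_left)
  moreover have "d = n - length (us @ [complex_of_real c \<cdot>\<^sub>v x])" using Suc(2) by auto
  ultimately obtain ws where "orthonormal n (us @ [complex_of_real c \<cdot>\<^sub>v x] @ ws)"
    "length (us @ [complex_of_real c \<cdot>\<^sub>v x] @ ws) = n"
    using Suc(1) lt by fastforce
  then show ?case by (intro exI[of _ "[complex_of_real c \<cdot>\<^sub>v x] @ ws"]) auto
qed

lemma unitary_mat_of_cols:
  assumes o: "orthonormal n vs" and l: "length vs = n"
  shows "unitary_mat n (mat_of_cols n vs)"
proof -
  let ?W = "mat_of_cols n vs"
  have W: "?W \<in> carrier_mat n n" using l by auto
  have dims: "vs ! i \<in> carrier_vec n" if "i < n" for i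
    using o l that by (auto simp: orthonormal_def)
  have "adj ?W * ?W = 1\<^sub>m n"
  proof (rule eq_matI)
    fix i j assume "i < dim_row (1\<^sub>m n)" "j < dim_col (1\<^sub>m n)"
    then have i: "i < n" and j: "j < n" by auto
    have "(adj ?W * ?W) $$ (i,j) = vs ! j \<bullet>c vs ! i"
      using i j l dims[OF i] dims[OF j]
      by (auto simp: scalar_prod_def mat_of_cols_def mult.commute intro!: sum.cong)
    also have "\<dots> = 1\<^sub>m n $$ (i,j)" using orthonormal_nth[OF o, of j i] i j l by auto
    finally show "(adj ?W * ?W) $$ (i,j) = 1\<^sub>m n $$ (i,j)" .
  qed (use W in auto)
  then have "?W * adj ?W = 1\<^sub>m n" using mat_mult_left_right_inverse[of "adj ?W" n ?W] W by auto
  then show ?thesis using W by (simp add: unitary_mat_def)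
qed

lemma orthonormal_perm:
  "set us = set vs \<Longrightarrow> distinct vs \<Longrightarrow> orthonormal n us \<Longrightarrow> orthonormal n vs"
  unfolding orthonormal_def by auto

lemma map_cnj_mat_of_cols:
  "set us \<subseteq> carrier_vec n \<Longrightarrow> map_mat cnj (mat_of_cols n us) = mat_of_cols n (map conjugate us)"
proof (rule eq_matI)
  fix i j assume us: "set us \<subseteq> carrier_vec n"
    and ij: "i < dim_row (mat_of_cols n (map conjugate us))" "j < dim_col (mat_of_cols n (map conjugate us))"
  then have "us ! j \<in> carrier_vec n" using nth_mem[of j us] by auto
  then show "map_mat cnj (mat_of_cols n us) $$ (i, j) = mat_of_cols n (map conjugate us) $$ (i, j)"
    using ij by (auto simp: mat_of_cols_def)
qed auto

lemma exists_unit_eigenvector: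
  fixes H :: "complex mat"
  assumes H: "H \<in> carrier_mat n n" and n: "n > 0"
  obtains lam v where "v \<in> carrier_vec n" "v \<bullet>c v = 1" "H *\<^sub>v v = lam \<cdot>\<^sub>v v"
proof -
  obtain as where cp: "char_poly H = (\<Prod>a\<leftarrow>as. [:- a, 1:])" "length as = n"
    using char_poly_factorized[OF H] by auto
  then obtain a where a: "a \<in> set as" using n by (cases as) auto
  have "poly (char_poly H) a = 0"
    unfolding cp(1) using a by (simp add: poly_prod_list prod_list_zero_iff)
  then obtain v where v: "v \<in> carrier_vec n" "v \<noteq> 0\<^sub>v n" "H *\<^sub>v v = a \<cdot>\<^sub>v v"
    using eigenvalue_root_char_poly[OF H] H unfolding eigenvalue_def eigenvector_def by auto
  obtain c where c: "(complex_of_real c \<cdot>\<^sub>v v) \<bullet>c (complex_of_real c \<cdot>\<^sub>v v) = 1"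
    using exists_unit_multiple[OF v(1,2)] by auto
  show ?thesis
  proof (rule that)
    show "complex_of_real c \<cdot>\<^sub>v v \<in> carrier_vec n" using v by simp
    show "H *\<^sub>v (complex_of_real c \<cdot>\<^sub>v v) = a \<cdot>\<^sub>v (complex_of_real c \<cdot>\<^sub>v v)"
      using v H by (simp add: mult_mat_vec smult_smult_assoc mult.commute)
  qed (rule c)
qed

lemma exists_kernel_vec:
  fixes z :: "complex mat"
  assumes z: "z \<in> carrier_mat m n" and mn: "m \<le> n"
    and u: "u \<in> carrier_vec m" "u \<noteq> 0\<^sub>v m" and adj_u: "adj z *\<^sub>v u = 0\<^sub>v n"
  shows "\<exists>v \<in> carrier_vec n. v \<noteq> 0\<^sub>v n \<and> z *\<^sub>v v = 0\<^sub>v m"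
proof (cases "m = n")
  case True
  have zT: "transpose_mat z \<in> carrier_mat n n" using z True by auto
  have "transpose_mat z *\<^sub>v conjugate u = conjugate (adj z *\<^sub>v u)"
    using z u by (intro eq_vecI) (auto simp: scalar_prod_def cnj_sum mult.commute)
  then have "det (transpose_mat z) = 0"
    using det_0_iff_vec_prod_zero[OF zT] u adj_u True
    by (metis carrier_vec_conjugate conjugate_zero_iff_vec conjugate_zero_vec)
  then show ?thesis
    using det_0_iff_vec_prod_zero[of z n] det_transpose[of z n] z True by auto
next
  case False
  let ?rows = "map (\<lambda>i. conjugate (row z i)) [0..<m]"
  have "length ?rows < n" "set ?rows \<subseteq> carrier_vec n" using False mn z by auto
  then obtain x where x: "x \<in> carrier_vec n" "x \<noteq> 0\<^sub>v n" "\<forall>v\<in>set ?rows. x \<bullet>c v = 0"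
    using exists_orthogonal_vec by blast
  have "z *\<^sub>v x = 0\<^sub>v m"
  proof (rule eq_vecI)
    fix i assume "i < dim_vec (0\<^sub>v m)"
    then have i: "i < m" by simp
    then have "x \<bullet>c conjugate (row z i) = 0" using x(3) by auto
    then show "(z *\<^sub>v x) $ i = 0\<^sub>v m $ i"
      using i z x(1) by (auto simp: scalar_prod_def mult.commute)
  qed (use z in auto)
  then show ?thesis using x by auto
qed

lemma exists_unit_kernel_vec:
  fixes z :: "complex mat"
  assumes z: "z \<in> carrier_mat m n" and mn: "m \<le> n"
    and u: "u \<in> carrier_vec m" "u \<noteq> 0\<^sub>v m" and adj_u: "adj z *\<^sub>v u = 0\<^sub>v n"
  obtains v where "v \<in> carrier_vec n" "v \<bullet>c v = 1" "z *\<^sub>v v = 0\<^sub>v m"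
proof -
  obtain v where v: "v \<in> carrier_vec n" "v \<noteq> 0\<^sub>v n" "z *\<^sub>v v = 0\<^sub>v m"
    using exists_kernel_vec[OF assms] by auto
  obtain c where c: "(complex_of_real c \<cdot>\<^sub>v v) \<bullet>c (complex_of_real c \<cdot>\<^sub>v v) = 1"
    using exists_unit_multiple[OF v(1,2)] by auto
  show ?thesis
  proof (rule that)
    show "complex_of_real c \<cdot>\<^sub>v v \<in> carrier_vec n" using v by simp
    show "z *\<^sub>v (complex_of_real c \<cdot>\<^sub>v v) = 0\<^sub>v m"
      using v z by (simp add: mult_mat_vec)
  qed (rule c)
qed

lemma gram_eigenvalue:
  fixes z :: "complex mat"
  assumes z: "z \<in> carrier_mat m n" and u: "u \<in> carrier_vec m" "u \<bullet>c u = 1"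
    and eig: "(z * adj z) *\<^sub>v u = lam \<cdot>\<^sub>v u"
  shows "lam = (adj z *\<^sub>v u) \<bullet>c (adj z *\<^sub>v u)"
proof -
  have y: "adj z *\<^sub>v u \<in> carrier_vec n" using z u by (metis adj_carrier_mat mult_mat_vec_carrier)
  have "lam = (lam \<cdot>\<^sub>v u) \<bullet>c u" using u by (simp add: cscalar_smult_left)
  also have "\<dots> = (z *\<^sub>v (adj z *\<^sub>v u)) \<bullet>c u"
    using eig z u by (simp add: assoc_mult_mat_vec[of z m n "adj z" m u])
  also have "\<dots> = (adj z *\<^sub>v u) \<bullet>c (adj z *\<^sub>v u)"
    by (rule cscalar_adj[OF z y u(1)])
  finally show ?thesis .
qed

text \<open>A unit eigenvector \<open>u\<close> of \<open>z * adj z\<close> yields the singular pair: its eigenvalue is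
  \<open>norm2_vec (adj z *\<^sub>v u)\<close>, and \<open>v\<close> is \<open>adj z *\<^sub>v u\<close> normalized.\<close>

lemma exists_singular_pair:
  fixes z :: "complex mat"
  assumes z: "z \<in> carrier_mat m n" and mn: "m \<le> n" and m: "0 < m"
  obtains u v sg where "u \<in> carrier_vec m" "u \<bullet>c u = 1" "v \<in> carrier_vec n" "v \<bullet>c v = 1" "sg \<ge> 0"
    "z *\<^sub>v v = complex_of_real sg \<cdot>\<^sub>v u" "adj z *\<^sub>v u = complex_of_real sg \<cdot>\<^sub>v v"
proof -
  obtain lam u where u: "u \<in> carrier_vec m" "u \<bullet>c u = 1" "(z * adj z) *\<^sub>v u = lam \<cdot>\<^sub>v u"
    using exists_unit_eigenvector[of "z * adj z" m] z m by (metis adj_carrier_mat mult_carrier_mat)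
  define y where "y = adj z *\<^sub>v u"
  have y: "y \<in> carrier_vec n" using z u by (metis adj_carrier_mat mult_mat_vec_carrier y_def)
  have zy: "z *\<^sub>v y = lam \<cdot>\<^sub>v u"
    using u z by (simp add: y_def assoc_mult_mat_vec[of z m n "adj z" m u])
  have lam_y: "lam = y \<bullet>c y" unfolding y_def by (rule gram_eigenvalue[OF z u])
  then have lam: "lam = complex_of_real (norm2_vec y)" by (simp add: cscalar_self)
  show ?thesis
  proof (cases "y = 0\<^sub>v n")
    case True
    have "u \<noteq> 0\<^sub>v m" using u(2) by auto
    then obtain v where "v \<in> carrier_vec n" "v \<bullet>c v = 1" "z *\<^sub>v v = 0\<^sub>v m"
      using exists_unit_kernel_vec[OF z mn u(1)] True by (auto simp: y_def)
    then show ?thesis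
      using that[of u v 0] u True by (simp add: y_def)
  next
    case False
    define sg where "sg = sqrt (norm2_vec y)"
    have sg: "sg > 0" "complex_of_real sg * complex_of_real sg = lam"
      using norm2_vec_pos[OF y False] by (auto simp: sg_def lam simp flip: of_real_mult)
    define v where "v = complex_of_real (1 / sg) \<cdot>\<^sub>v y"
    have v: "v \<in> carrier_vec n" using y by (simp add: v_def)
    have "v \<bullet>c v = complex_of_real (1 / sg) * complex_of_real (1 / sg) * lam"
      using y by (simp add: v_def cscalar_smult_left cscalar_smult_right lam_y)
    also have "\<dots> = 1" using sg by (simp flip: sg(2))
    finally have vv: "v \<bullet>c v = 1" .
    have "z *\<^sub>v v = complex_of_real (1 / sg) \<cdot>\<^sub>v (lam \<cdot>\<^sub>v u)"
      using z y by (simp add: v_def mult_mat_vec zy)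
    also have "\<dots> = complex_of_real sg \<cdot>\<^sub>v u"
      using sg by (simp add: smult_smult_assoc flip: sg(2))
    finally have zv: "z *\<^sub>v v = complex_of_real sg \<cdot>\<^sub>v u" .
    have "adj z *\<^sub>v u = complex_of_real sg \<cdot>\<^sub>v v"
      using sg by (simp add: v_def smult_smult_assoc y_def flip: of_real_mult)
    then show ?thesis using that[OF u(1,2) v vv _ zv] sg by simp
  qed
qed

section \<open>Singular value decomposition\<close>

definition ul_block :: "nat \<Rightarrow> nat \<Rightarrow> 'a mat \<Rightarrow> 'a mat" where
  "ul_block k l A = mat k l (\<lambda>(i,j). A $$ (i,j))"

definition lr_block :: "nat \<Rightarrow> nat \<Rightarrow> 'a mat \<Rightarrow> 'a mat" where
  "lr_block k l A = mat (dim_row A - k) (dim_col A - l) (\<lambda>(i,j). A $$ (i + k, j + l))"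

lemma ul_block_carrier[simp]: "ul_block k l A \<in> carrier_mat k l"
  by (simp add: ul_block_def)

lemma lr_block_carrier[simp]:
  "A \<in> carrier_mat (k1 + k2) (l1 + l2) \<Longrightarrow> lr_block k1 l1 A \<in> carrier_mat k2 l2"
  by (simp add: lr_block_def)

lemma four_block_split:
  fixes A :: "'a :: zero mat"
  assumes A: "A \<in> carrier_mat (k1 + k2) (l1 + l2)"
    and off_diag: "\<And>i j. i < k1 + k2 \<Longrightarrow> j < l1 + l2 \<Longrightarrow> (i < k1) \<noteq> (j < l1) \<Longrightarrow> A $$ (i,j) = 0"
  shows "A = four_block_mat (ul_block k1 l1 A) (0\<^sub>m k1 l2) (0\<^sub>m k2 l1) (lr_block k1 l1 A)"
  by (rule eq_matI) (use A off_diag in \<open>auto simp: ul_block_def lr_block_def\<close>)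

lemma four_block_diag_factor:
  fixes W1 W2 :: "'a :: comm_ring_1 mat"
  assumes W1: "W1 \<in> carrier_mat (k1 + k2) (k1 + k2)" and W2: "W2 \<in> carrier_mat (l1 + l2) (l1 + l2)"
    and UA: "UA \<in> carrier_mat k1 k1" and DA: "DA \<in> carrier_mat k1 l1" and VA: "VA \<in> carrier_mat l1 l1"
    and UB: "UB \<in> carrier_mat k2 k2" and DB: "DB \<in> carrier_mat k2 l2" and VB: "VB \<in> carrier_mat l2 l2"
  shows "W1 * four_block_mat (UA * DA * VA) (0\<^sub>m k1 l2) (0\<^sub>m k2 l1) (UB * DB * VB) * W2
    = (W1 * four_block_mat UA (0\<^sub>m k1 k2) (0\<^sub>m k2 k1) UB) * four_block_mat DA (0\<^sub>m k1 l2) (0\<^sub>m k2 l1) DB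
      * (four_block_mat VA (0\<^sub>m l1 l2) (0\<^sub>m l2 l1) VB * W2)"
proof -
  let ?U = "four_block_mat UA (0\<^sub>m k1 k2) (0\<^sub>m k2 k1) UB"
  let ?D = "four_block_mat DA (0\<^sub>m k1 l2) (0\<^sub>m k2 l1) DB"
  let ?V = "four_block_mat VA (0\<^sub>m l1 l2) (0\<^sub>m l2 l1) VB"
  have U: "?U \<in> carrier_mat (k1 + k2) (k1 + k2)" and D: "?D \<in> carrier_mat (k1 + k2) (l1 + l2)"
    and V: "?V \<in> carrier_mat (l1 + l2) (l1 + l2)"
    using UA UB DA DB VA VB by auto
  have "?U * ?D * ?V = four_block_mat (UA * DA * VA) (0\<^sub>m k1 l2) (0\<^sub>m k2 l1) (UB * DB * VB)"
    using UA UB DA DB VA VB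
    by (simp add: mult_four_block_mat[of _ k1 k1 _ k2 _ k2 _ _ l1 _ l2]
        mult_four_block_mat[of _ k1 l1 _ l2 _ k2 _ _ l1 _ l2])
  moreover have "W1 * ?U * ?D * (?V * W2) = W1 * (?U * ?D * ?V) * W2"
  proof -
    have WUD: "W1 * ?U * ?D \<in> carrier_mat (k1 + k2) (l1 + l2)" and UD: "?U * ?D \<in> carrier_mat (k1 + k2) (l1 + l2)"
      using W1 U D by auto
    have "W1 * ?U * ?D * (?V * W2) = W1 * ?U * ?D * ?V * W2"
      using assoc_mult_mat[OF WUD V W2] by simp
    moreover have "W1 * ?U * ?D * ?V = W1 * (?U * ?D * ?V)"
      by (simp only: assoc_mult_mat[OF W1 U D] assoc_mult_mat[OF W1 UD V])
    ultimately show ?thesis by (simp only:)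
  qed
  ultimately show ?thesis by simp
qed

definition rect_diag :: "nat \<Rightarrow> nat \<Rightarrow> (nat \<Rightarrow> real) \<Rightarrow> complex mat" where
  "rect_diag m n s = mat m n (\<lambda>(i,j). if i = j then complex_of_real (s i) else 0)"

definition seq_cons :: "'a \<Rightarrow> (nat \<Rightarrow> 'a) \<Rightarrow> nat \<Rightarrow> 'a" where
  "seq_cons a s i = (if i = 0 then a else s (i - 1))"

lemma rect_diag_carrier[simp]: "rect_diag m n s \<in> carrier_mat m n"
  by (simp add: rect_diag_def)

lemma rect_diag_seq_cons:
  "rect_diag (1 + m) (1 + n) (seq_cons a s) =
    four_block_mat (rect_diag 1 1 (\<lambda>_. a)) (0\<^sub>m 1 n) (0\<^sub>m m 1) (rect_diag m n s)"
  by (rule eq_matI) (auto simp: rect_diag_def seq_cons_def)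

lemma cscalar_mat_of_cols_entry:
  fixes z :: "complex mat"
  assumes z: "z \<in> carrier_mat m n" and us: "set us \<subseteq> carrier_vec m" and vs: "set vs \<subseteq> carrier_vec n"
    and i: "i < length us" and j: "j < length vs"
  shows "(adj (mat_of_cols m us) * z * mat_of_cols n vs) $$ (i,j) = (z *\<^sub>v vs ! j) \<bullet>c us ! i"
proof -
  let ?W1 = "mat_of_cols m us" and ?W2 = "mat_of_cols n vs"
  have ui: "us ! i \<in> carrier_vec m" and vj: "vs ! j \<in> carrier_vec n" using us vs i j by auto
  have "adj ?W1 * z * ?W2 = adj ?W1 * (z * ?W2)"
    using z by (simp add: assoc_mult_mat[of _ "length us" m _ n _ "length vs"])
  moreover have "col (z * ?W2) j = z *\<^sub>v vs ! j"
    using z j vj by (simp add: col_mult2[of z m n ?W2 "length vs" j])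
  moreover have "row (adj ?W1) i = conjugate (us ! i)"
    using i ui by (intro eq_vecI) (auto simp: mat_of_cols_def)
  ultimately show ?thesis
    using i j z ui by (simp add: conjugate_vec_sprod_comm[of "us ! i" m] scalar_prod_def mult.commute)
qed

lemma unitary_equivalence_cancel:
  fixes z :: "complex mat"
  assumes W1: "unitary_mat m W1" and W2: "unitary_mat n W2" and z: "z \<in> carrier_mat m n"
  shows "W1 * (adj W1 * z * W2) * adj W2 = z"
proof -
  have c1: "W1 \<in> carrier_mat m m" and c2: "W2 \<in> carrier_mat n n"
    using W1 W2 by (auto simp: unitary_carrier)
  have a1: "adj W1 \<in> carrier_mat m m" and a2: "adj W2 \<in> carrier_mat n n" and az: "adj W1 * z \<in> carrier_mat m n"
    using c1 c2 z by auto
  have "W1 * (adj W1 * z * W2) = W1 * adj W1 * z * W2"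
    using assoc_mult_mat[OF c1 az c2] assoc_mult_mat[OF c1 a1 z] by simp
  then have "W1 * (adj W1 * z * W2) = z * W2"
    using W1 z by (simp add: unitary_mat_def)
  then have "W1 * (adj W1 * z * W2) * adj W2 = z * (W2 * adj W2)"
    using assoc_mult_mat[OF z c2 a2] by simp
  then show ?thesis
    using W2 z by (simp add: unitary_mat_def)
qed

lemma unitary_four_block_equivalence:
  fixes W1 W2 :: "complex mat"
  assumes W1: "unitary_mat (k1 + k2) W1" and W2: "unitary_mat (l1 + l2) W2"
    and UA: "unitary_mat k1 UA" and VA: "unitary_mat l1 VA" and UB: "unitary_mat k2 UB" and VB: "unitary_mat l2 VB"
    and DA: "DA \<in> carrier_mat k1 l1" and DB: "DB \<in> carrier_mat k2 l2"
  shows "\<exists>U V. unitary_mat (k1 + k2) U \<and> unitary_mat (l1 + l2) V \<and>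
    W1 * four_block_mat (UA * DA * VA) (0\<^sub>m k1 l2) (0\<^sub>m k2 l1) (UB * DB * VB) * W2
      = U * four_block_mat DA (0\<^sub>m k1 l2) (0\<^sub>m k2 l1) DB * V"
  using four_block_diag_factor[OF unitary_carrier[OF W1] unitary_carrier[OF W2] unitary_carrier[OF UA] DA
      unitary_carrier[OF VA] unitary_carrier[OF UB] DB unitary_carrier[OF VB]]
    unitary_mult[OF W1 unitary_four_block[OF UA UB]] unitary_mult[OF unitary_four_block[OF VA VB] W2]
  by blast

text \<open>Deflation step: a singular pair \<open>(u, v)\<close>, completed to unitary frames, splits off the
  singular value \<open>sg\<close>.\<close>

lemma svd_deflation:
  fixes z :: "complex mat"
  assumes z: "z \<in> carrier_mat (1 + m) (1 + n)" and mn: "m \<le> n"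
  obtains W1 W2 sg B where "unitary_mat (1 + m) W1" "unitary_mat (1 + n) W2" "sg \<ge> 0"
    "B \<in> carrier_mat m n" "z = W1 * four_block_mat (rect_diag 1 1 (\<lambda>_. sg)) (0\<^sub>m 1 n) (0\<^sub>m m 1) B * W2"
proof -
  obtain u v sg where u: "u \<in> carrier_vec (1 + m)" "u \<bullet>c u = 1" and v: "v \<in> carrier_vec (1 + n)" "v \<bullet>c v = 1"
    and sg: "sg \<ge> 0" and zv: "z *\<^sub>v v = complex_of_real sg \<cdot>\<^sub>v u" and zu: "adj z *\<^sub>v u = complex_of_real sg \<cdot>\<^sub>v v"
    using exists_singular_pair[OF z] mn by auto
  obtain us vs where us: "orthonormal (1 + m) (u # us)" "length (u # us) = 1 + m"
    and vs: "orthonormal (1 + n) (v # vs)" "length (v # vs) = 1 + n"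
    using orthonormal_extend[of "1 + m" "[u]"] orthonormal_extend[of "1 + n" "[v]"] u v
    by (auto simp: orthonormal_def)
  have us_c: "set (u # us) \<subseteq> carrier_vec (1 + m)" and vs_c: "set (v # vs) \<subseteq> carrier_vec (1 + n)"
    using us vs by (auto simp: orthonormal_def)
  define W1 where "W1 = mat_of_cols (1 + m) (u # us)"
  define W2 where "W2 = mat_of_cols (1 + n) (v # vs)"
  have W1: "unitary_mat (1 + m) W1" and W2: "unitary_mat (1 + n) W2"
    unfolding W1_def W2_def using unitary_mat_of_cols us vs by auto
  define z' where "z' = adj W1 * z * W2"
  have z': "z' \<in> carrier_mat (1 + m) (1 + n)"
    using mult_carrier_mat[OF mult_carrier_mat[OF adj_carrier_mat[OF unitary_carrier[OF W1]] z]
        unitary_carrier[OF W2]] by (simp add: z'_def)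
  have entry: "z' $$ (i,j) = (z *\<^sub>v (v # vs) ! j) \<bullet>c (u # us) ! i" if "i < 1 + m" "j < 1 + n" for i j
    unfolding z'_def W1_def W2_def using cscalar_mat_of_cols_entry[OF z us_c vs_c] that us vs by auto
  have col0: "z' $$ (i,0) = (if i = 0 then complex_of_real sg else 0)" if i: "i < 1 + m" for i
    using entry[OF i, of 0] zv orthonormal_Cons_nth[OF us(1), of i] us(2) i u(1)
    by (simp add: cscalar_smult_left)
  have row0: "z' $$ (0,j) = (if j = 0 then complex_of_real sg else 0)" if j: "j < 1 + n" for j
    using entry[of 0 j] j cscalar_adj[OF z _ u(1), of "(v # vs) ! j"] zu
      orthonormal_Cons_nth[OF vs(1), of j] vs(2) v(1)
    by (simp add: cscalar_smult_right)
  have "z' = four_block_mat (ul_block 1 1 z') (0\<^sub>m 1 n) (0\<^sub>m m 1) (lr_block 1 1 z')"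
    by (rule four_block_split[OF z']) (use col0 row0 in auto)
  moreover have "ul_block 1 1 z' = rect_diag 1 1 (\<lambda>_. sg)"
    by (rule eq_matI) (auto simp: ul_block_def rect_diag_def col0)
  moreover have "z = W1 * z' * adj W2"
    unfolding z'_def using unitary_equivalence_cancel[OF W1 W2 z] by simp
  ultimately show ?thesis
    using that[OF W1 unitary_adj[OF W2] sg lr_block_carrier[OF z']] by metis
qed

theorem singular_value_decomposition:
  fixes z :: "complex mat"
  assumes "z \<in> carrier_mat m n" "m \<le> n"
  shows "\<exists>U V s. unitary_mat m U \<and> unitary_mat n V \<and> (\<forall>i. s i \<ge> 0) \<and> z = U * rect_diag m n s * V"
  using assms
proof (induct m arbitrary: n z)
  case 0
  have "z = 1\<^sub>m 0 * rect_diag 0 n (\<lambda>_. 0) * 1\<^sub>m n"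
    by (rule eq_matI) (use 0 in auto)
  then show ?case
    using unitary_one[of 0] unitary_one[of n] by (intro exI[of _ "1\<^sub>m 0"] exI[of _ "1\<^sub>m n"] exI[of _ "\<lambda>_. 0"]) auto
next
  case (Suc m)
  then obtain n' where n: "n = 1 + n'" by (cases n) auto
  have z: "z \<in> carrier_mat (1 + m) (1 + n')" and mn: "m \<le> n'" using Suc n by auto
  obtain W1 W2 sg B where W: "unitary_mat (1 + m) W1" "unitary_mat (1 + n') W2" "sg \<ge> 0"
    "B \<in> carrier_mat m n'"
    and zW: "z = W1 * four_block_mat (rect_diag 1 1 (\<lambda>_. sg)) (0\<^sub>m 1 n') (0\<^sub>m m 1) B * W2"
    by (rule svd_deflation[OF z mn])
  obtain UB VB s where B: "unitary_mat m UB" "unitary_mat n' VB" "\<forall>i. s i \<ge> 0"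
    "B = UB * rect_diag m n' s * VB"
    using Suc(1)[OF W(4) mn] by auto
  have "rect_diag 1 1 (\<lambda>_. sg) = 1\<^sub>m 1 * rect_diag 1 1 (\<lambda>_. sg) * 1\<^sub>m 1"
    by (metis left_mult_one_mat right_mult_one_mat rect_diag_carrier)
  then have "z = W1 * four_block_mat (1\<^sub>m 1 * rect_diag 1 1 (\<lambda>_. sg) * 1\<^sub>m 1) (0\<^sub>m 1 n') (0\<^sub>m m 1)
      (UB * rect_diag m n' s * VB) * W2"
    using zW B(4) by metis
  then obtain U V where "unitary_mat (1 + m) U" "unitary_mat (1 + n') V"
    "z = U * four_block_mat (rect_diag 1 1 (\<lambda>_. sg)) (0\<^sub>m 1 n') (0\<^sub>m m 1) (rect_diag m n' s) * V"
    using unitary_four_block_equivalence[OF W(1,2) unitary_one unitary_one B(1,2) rect_diag_carrier rect_diag_carrier]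
    by metis
  moreover have "\<forall>i. seq_cons sg s i \<ge> 0" using B(3) W(3) by (simp add: seq_cons_def)
  ultimately show ?case
    using rect_diag_seq_cons[of m n' sg s] n by (intro exI[of _ U] exI[of _ V] exI[of _ "seq_cons sg s"]) auto
qed

section \<open>Takagi factorization of complex symmetric matrices\<close>

lemma adj_eq_cnj_transpose: "adj z = map_mat cnj (transpose_mat z)"
  by (rule eq_matI) auto

lemma mult_conjugate_vec:
  fixes z :: "complex mat"
  assumes "z \<in> carrier_mat m n" "x \<in> carrier_vec n"
  shows "z *\<^sub>v conjugate x = conjugate (map_mat cnj z *\<^sub>v x)"
  by (rule eq_vecI) (use assms in \<open>auto simp: scalar_prod_def cnj_sum\<close>)

lemma transpose_congruence:
  fixes W z :: "complex mat"
  assumes W: "W \<in> carrier_mat n n" and z: "z \<in> carrier_mat n n"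
  shows "transpose_mat (adj W * z * map_mat cnj W) = adj W * transpose_mat z * map_mat cnj W"
proof -
  have aW: "adj W \<in> carrier_mat n n" and cW: "map_mat cnj W \<in> carrier_mat n n" using W by auto
  have az: "adj W * z \<in> carrier_mat n n" using aW z by auto
  have "transpose_mat (adj W * z * map_mat cnj W) = transpose_mat (map_mat cnj W) * transpose_mat (adj W * z)"
    using transpose_mult[OF az cW] .
  also have "transpose_mat (adj W * z) = transpose_mat z * transpose_mat (adj W)"
    using transpose_mult[OF aW z] .
  also have "transpose_mat (adj W) = map_mat cnj W" by (simp add: transpose_adj)
  also have "transpose_mat (map_mat cnj W) = adj W" by (rule eq_matI) auto
  also have "adj W * (transpose_mat z * map_mat cnj W) = adj W * transpose_mat z * map_mat cnj W"
    using assoc_mult_mat[OF aW _ cW, of "transpose_mat z"] z by simp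
  finally show ?thesis .
qed

text \<open>An orthonormal basis \<open>us\<close> acts by the congruence \<open>z \<mapsto> adj W * z * map_mat cnj W\<close>, the natural
  action on symmetric and skew-symmetric matrices.\<close>

lemma congruence_by_orthonormal_basis:
  fixes z :: "complex mat"
  assumes o: "orthonormal n us" and l: "length us = n" and z: "z \<in> carrier_mat n n"
  obtains W z' where "unitary_mat n W" "z' \<in> carrier_mat n n" "z = W * z' * transpose_mat W"
    "\<And>i j. i < n \<Longrightarrow> j < n \<Longrightarrow> z' $$ (i,j) = (z *\<^sub>v conjugate (us ! j)) \<bullet>c us ! i"
    "transpose_mat z = z \<Longrightarrow> transpose_mat z' = z'"
    "transpose_mat z = - z \<Longrightarrow> transpose_mat z' = - z'"
proof -
  have c: "set us \<subseteq> carrier_vec n" and c': "set (map conjugate us) \<subseteq> carrier_vec n"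
    using o by (auto simp: orthonormal_def)
  define W where "W = mat_of_cols n us"
  have W: "unitary_mat n W" unfolding W_def by (rule unitary_mat_of_cols[OF o l])
  have cW: "W \<in> carrier_mat n n" using unitary_carrier[OF W] .
  define z' where "z' = adj W * z * map_mat cnj W"
  have z': "z' \<in> carrier_mat n n"
    using mult_carrier_mat[OF mult_carrier_mat[OF adj_carrier_mat[OF cW] z] map_carrier_mat[THEN iffD2, OF cW]]
    by (simp add: z'_def)
  have "map_mat cnj W = mat_of_cols n (map conjugate us)"
    unfolding W_def by (rule map_cnj_mat_of_cols[OF c])
  then have entries: "z' $$ (i,j) = (z *\<^sub>v conjugate (us ! j)) \<bullet>c us ! i" if "i < n" "j < n" for i j
    using cscalar_mat_of_cols_entry[OF z c c', of i j] that l unfolding z'_def W_def by simp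
  have "z = W * z' * transpose_mat W"
    using unitary_equivalence_cancel[OF W unitary_map_cnj[OF W] z] by (simp add: z'_def adj_map_cnj)
  moreover have tr: "transpose_mat z' = adj W * transpose_mat z * map_mat cnj W"
    unfolding z'_def by (rule transpose_congruence[OF cW z])
  ultimately show ?thesis
    using that[OF W z' _ entries] cW z
    by (simp add: tr z'_def uminus_mult_left_mat uminus_mult_right_mat)
qed

lemma four_block_diag_congruence:
  fixes W :: "complex mat"
  assumes W: "W \<in> carrier_mat (k1 + k2) (k1 + k2)"
    and UA: "UA \<in> carrier_mat k1 k1" and DA: "DA \<in> carrier_mat k1 k1"
    and UB: "UB \<in> carrier_mat k2 k2" and DB: "DB \<in> carrier_mat k2 k2"
  shows "W * four_block_mat (UA * DA * transpose_mat UA) (0\<^sub>m k1 k2) (0\<^sub>m k2 k1) (UB * DB * transpose_mat UB)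
      * transpose_mat W
    = (W * four_block_mat UA (0\<^sub>m k1 k2) (0\<^sub>m k2 k1) UB) * four_block_mat DA (0\<^sub>m k1 k2) (0\<^sub>m k2 k1) DB
      * transpose_mat (W * four_block_mat UA (0\<^sub>m k1 k2) (0\<^sub>m k2 k1) UB)"
proof -
  have "transpose_mat (W * four_block_mat UA (0\<^sub>m k1 k2) (0\<^sub>m k2 k1) UB)
      = transpose_mat (four_block_mat UA (0\<^sub>m k1 k2) (0\<^sub>m k2 k1) UB) * transpose_mat W"
    using W UA UB by (subst transpose_mult[of _ "k1 + k2" "k1 + k2"]) auto
  also have "transpose_mat (four_block_mat UA (0\<^sub>m k1 k2) (0\<^sub>m k2 k1) UB)
      = four_block_mat (transpose_mat UA) (0\<^sub>m k1 k2) (0\<^sub>m k2 k1) (transpose_mat UB)"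
    using UA UB by (subst transpose_four_block_mat) auto
  finally have "transpose_mat (W * four_block_mat UA (0\<^sub>m k1 k2) (0\<^sub>m k2 k1) UB)
      = four_block_mat (transpose_mat UA) (0\<^sub>m k1 k2) (0\<^sub>m k2 k1) (transpose_mat UB) * transpose_mat W" .
  then show ?thesis
    using four_block_diag_factor[OF W _ UA DA _ UB DB] W UA UB by simp
qed

lemma unitary_four_block_congruence:
  fixes W :: "complex mat"
  assumes W: "unitary_mat (k1 + k2) W" and UA: "unitary_mat k1 UA" and UB: "unitary_mat k2 UB"
    and DA: "DA \<in> carrier_mat k1 k1" and DB: "DB \<in> carrier_mat k2 k2"
  shows "\<exists>U. unitary_mat (k1 + k2) U \<and>
    W * four_block_mat (UA * DA * transpose_mat UA) (0\<^sub>m k1 k2) (0\<^sub>m k2 k1) (UB * DB * transpose_mat UB)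
      * transpose_mat W = U * four_block_mat DA (0\<^sub>m k1 k2) (0\<^sub>m k2 k1) DB * transpose_mat U"
  using four_block_diag_congruence[OF unitary_carrier[OF W] unitary_carrier[OF UA] DA unitary_carrier[OF UB] DB]
    unitary_mult[OF W unitary_four_block[OF UA UB]] by blast

lemma takagi_combination:
  fixes z :: "complex mat"
  assumes z: "z \<in> carrier_mat n n" and sym: "transpose_mat z = z"
    and u: "u \<in> carrier_vec n" and v: "v \<in> carrier_vec n"
    and zv: "z *\<^sub>v v = complex_of_real sg \<cdot>\<^sub>v u" and zu: "adj z *\<^sub>v u = complex_of_real sg \<cdot>\<^sub>v v"
  shows "z *\<^sub>v conjugate (a \<cdot>\<^sub>v u + cnj a \<cdot>\<^sub>v conjugate v) =
    complex_of_real sg \<cdot>\<^sub>v (a \<cdot>\<^sub>v u + cnj a \<cdot>\<^sub>v conjugate v)"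
proof -
  have zcu: "z *\<^sub>v conjugate u = complex_of_real sg \<cdot>\<^sub>v conjugate v"
    using mult_conjugate_vec[OF z u] zu sym by (simp add: adj_eq_cnj_transpose conjugate_smult_vec)
  have "conjugate (a \<cdot>\<^sub>v u + cnj a \<cdot>\<^sub>v conjugate v) = cnj a \<cdot>\<^sub>v conjugate u + a \<cdot>\<^sub>v v"
    using u v by (simp add: conjugate_add_vec[of _ n] conjugate_smult_vec)
  then have "z *\<^sub>v conjugate (a \<cdot>\<^sub>v u + cnj a \<cdot>\<^sub>v conjugate v) = cnj a \<cdot>\<^sub>v (z *\<^sub>v conjugate u) + a \<cdot>\<^sub>v (z *\<^sub>v v)"
    using z u v by (simp add: mult_add_distrib_mat_vec[of z n n] mult_mat_vec[of z n n])
  then show ?thesis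
    using u v by (intro eq_vecI) (auto simp: zcu zv algebra_simps)
qed

lemma exists_nonzero_combination:
  fixes u v :: "complex vec"
  assumes u: "u \<in> carrier_vec n" "u \<noteq> 0\<^sub>v n" and v: "v \<in> carrier_vec n"
  shows "\<exists>a. a \<cdot>\<^sub>v u + cnj a \<cdot>\<^sub>v conjugate v \<noteq> 0\<^sub>v n"
proof (rule ccontr)
  assume "\<not> ?thesis"
  then have one: "1 \<cdot>\<^sub>v u + cnj 1 \<cdot>\<^sub>v conjugate v = 0\<^sub>v n" and i: "\<i> \<cdot>\<^sub>v u + cnj \<i> \<cdot>\<^sub>v conjugate v = 0\<^sub>v n"
    by blast+
  have "u $ k = 0" if k: "k < n" for k
  proof -
    have "u $ k + cnj (v $ k) = 0"
      using arg_cong[OF one, of "\<lambda>x. x $ k"] k u v by simp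
    moreover have "\<i> * (u $ k - cnj (v $ k)) = 0"
      using arg_cong[OF i, of "\<lambda>x. x $ k"] k u v by (simp add: algebra_simps)
    ultimately show ?thesis by (simp add: add_eq_0_iff)
  qed
  then have "u = 0\<^sub>v n" using u by (intro eq_vecI) auto
  then show False using u(2) by simp
qed

text \<open>For symmetric \<open>z\<close> a singular pair \<open>(u, v)\<close> yields solutions \<open>a \<cdot>\<^sub>v u + cnj a \<cdot>\<^sub>v conjugate v\<close>
  of the Takagi equation, and one of them is nonzero.\<close>

lemma exists_takagi_vec:
  fixes z :: "complex mat"
  assumes z: "z \<in> carrier_mat n n" and sym: "transpose_mat z = z" and n: "0 < n"
  obtains w sg where "w \<in> carrier_vec n" "w \<bullet>c w = 1" "sg \<ge> 0"
    "z *\<^sub>v conjugate w = complex_of_real sg \<cdot>\<^sub>v w"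
proof -
  obtain u v sg where u: "u \<in> carrier_vec n" "u \<bullet>c u = 1" and v: "v \<in> carrier_vec n"
    and sg: "sg \<ge> 0" and zv: "z *\<^sub>v v = complex_of_real sg \<cdot>\<^sub>v u"
    and zu: "adj z *\<^sub>v u = complex_of_real sg \<cdot>\<^sub>v v"
    by (rule exists_singular_pair[OF z le_refl n])
  have "u \<noteq> 0\<^sub>v n" using u(2) by auto
  then obtain a where a: "a \<cdot>\<^sub>v u + cnj a \<cdot>\<^sub>v conjugate v \<noteq> 0\<^sub>v n"
    using exists_nonzero_combination[OF u(1) _ v] by blast
  define w where "w = a \<cdot>\<^sub>v u + cnj a \<cdot>\<^sub>v conjugate v"
  have w: "w \<in> carrier_vec n" using u v by (simp add: w_def)
  obtain c where c: "(complex_of_real c \<cdot>\<^sub>v w) \<bullet>c (complex_of_real c \<cdot>\<^sub>v w) = 1"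
    using exists_unit_multiple[OF w a[folded w_def]] by auto
  have "z *\<^sub>v conjugate (complex_of_real c \<cdot>\<^sub>v w) = complex_of_real sg \<cdot>\<^sub>v (complex_of_real c \<cdot>\<^sub>v w)"
    using z w takagi_combination[OF z sym u(1) v zv zu, of a]
    by (simp add: w_def conjugate_smult_vec mult_mat_vec smult_smult_assoc mult.commute)
  then show ?thesis using that[OF _ c sg] w by simp
qed

lemma transpose_lr_block:
  "A \<in> carrier_mat (k1 + k2) (k1 + k2) \<Longrightarrow>
    transpose_mat (lr_block k1 k1 A) = lr_block k1 k1 (transpose_mat A)"
  by (rule eq_matI) (auto simp: lr_block_def)

lemma transpose_ul_block:
  "A \<in> carrier_mat (k1 + k2) (k1 + k2) \<Longrightarrow>
    transpose_mat (ul_block k1 k1 A) = ul_block k1 k1 (transpose_mat A)"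
  by (rule eq_matI) (auto simp: ul_block_def)

lemma transpose_eq_entry:
  "transpose_mat A = B \<Longrightarrow> A \<in> carrier_mat n n \<Longrightarrow> i < n \<Longrightarrow> j < n \<Longrightarrow> A $$ (j,i) = B $$ (i,j)"
  by auto

lemma takagi_deflation:
  fixes z :: "complex mat"
  assumes z: "z \<in> carrier_mat (1 + n) (1 + n)" and sym: "transpose_mat z = z"
  obtains W sg B where "unitary_mat (1 + n) W" "sg \<ge> 0" "B \<in> carrier_mat n n" "transpose_mat B = B"
    "z = W * four_block_mat (rect_diag 1 1 (\<lambda>_. sg)) (0\<^sub>m 1 n) (0\<^sub>m n 1) B * transpose_mat W"
proof -
  obtain w sg where w: "w \<in> carrier_vec (1 + n)" "w \<bullet>c w = 1" and sg: "sg \<ge> 0"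
    and zw: "z *\<^sub>v conjugate w = complex_of_real sg \<cdot>\<^sub>v w"
    by (rule exists_takagi_vec[OF z sym]) simp
  obtain ws where ws: "orthonormal (1 + n) (w # ws)" "length (w # ws) = 1 + n"
    using orthonormal_extend[of "1 + n" "[w]"] w by (auto simp: orthonormal_def)
  obtain W z' where W: "unitary_mat (1 + n) W" and z': "z' \<in> carrier_mat (1 + n) (1 + n)"
    and zW: "z = W * z' * transpose_mat W"
    and entries: "\<And>i j. i < 1 + n \<Longrightarrow> j < 1 + n \<Longrightarrow> z' $$ (i,j) = (z *\<^sub>v conjugate ((w # ws) ! j)) \<bullet>c (w # ws) ! i"
    and z'_sym: "transpose_mat z' = z'"
    by (rule congruence_by_orthonormal_basis[OF ws z]) (use sym in blast)+
  have col0: "z' $$ (i,0) = (if i = 0 then complex_of_real sg else 0)" if i: "i < 1 + n" for i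
    using entries[OF i, of 0] zw orthonormal_Cons_nth[OF ws(1), of i] ws(2) i w(1)
    by (simp add: cscalar_smult_left)
  have "z' = four_block_mat (ul_block 1 1 z') (0\<^sub>m 1 n) (0\<^sub>m n 1) (lr_block 1 1 z')"
    by (rule four_block_split[OF z']) (use col0 transpose_eq_entry[OF z'_sym z'] in auto)
  moreover have "ul_block 1 1 z' = rect_diag 1 1 (\<lambda>_. sg)"
    by (rule eq_matI) (auto simp: ul_block_def rect_diag_def col0)
  moreover have "transpose_mat (lr_block 1 1 z') = lr_block 1 1 z'"
    using transpose_lr_block[OF z'] z'_sym by simp
  ultimately show ?thesis
    using that[OF W sg lr_block_carrier[OF z']] zW by metis
qed

theorem takagi_factorization:
  fixes z :: "complex mat"
  assumes "z \<in> carrier_mat n n" "transpose_mat z = z"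
  shows "\<exists>U s. unitary_mat n U \<and> (\<forall>i. s i \<ge> 0) \<and> z = U * rect_diag n n s * transpose_mat U"
  using assms
proof (induct n arbitrary: z)
  case 0
  have "z = 1\<^sub>m 0 * rect_diag 0 0 (\<lambda>_. 0) * transpose_mat (1\<^sub>m 0)"
    by (rule eq_matI) (use 0 in auto)
  then show ?case using unitary_one[of 0] by (intro exI[of _ "1\<^sub>m 0"] exI[of _ "\<lambda>_. 0::real"]) auto
next
  case (Suc n)
  have z: "z \<in> carrier_mat (1 + n) (1 + n)" using Suc(2) by simp
  obtain W sg B where W: "unitary_mat (1 + n) W" "sg \<ge> 0" "B \<in> carrier_mat n n" "transpose_mat B = B"
    and zW: "z = W * four_block_mat (rect_diag 1 1 (\<lambda>_. sg)) (0\<^sub>m 1 n) (0\<^sub>m n 1) B * transpose_mat W"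
    by (rule takagi_deflation[OF z Suc(3)])
  obtain UB s where B: "unitary_mat n UB" "\<forall>i. s i \<ge> 0" "B = UB * rect_diag n n s * transpose_mat UB"
    using Suc(1)[OF W(3,4)] by auto
  have "rect_diag 1 1 (\<lambda>_. sg) = 1\<^sub>m 1 * rect_diag 1 1 (\<lambda>_. sg) * transpose_mat (1\<^sub>m 1)"
    by (metis left_mult_one_mat right_mult_one_mat rect_diag_carrier transpose_one)
  then have "z = W * four_block_mat (1\<^sub>m 1 * rect_diag 1 1 (\<lambda>_. sg) * transpose_mat (1\<^sub>m 1)) (0\<^sub>m 1 n) (0\<^sub>m n 1)
      (UB * rect_diag n n s * transpose_mat UB) * transpose_mat W"
    using zW B(3) by metis
  then obtain U where "unitary_mat (1 + n) U"
    "z = U * four_block_mat (rect_diag 1 1 (\<lambda>_. sg)) (0\<^sub>m 1 n) (0\<^sub>m n 1) (rect_diag n n s) * transpose_mat U"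
    using unitary_four_block_congruence[OF W(1) unitary_one B(1) rect_diag_carrier rect_diag_carrier] by metis
  moreover have "\<forall>i. seq_cons sg s i \<ge> 0" using B(2) W(2) by (simp add: seq_cons_def)
  ultimately show ?case
    using rect_diag_seq_cons[of n n sg s] by (intro exI[of _ U] exI[of _ "seq_cons sg s"]) auto
qed

section \<open>Youla decomposition of complex skew-symmetric matrices\<close>

definition pair_partner :: "nat \<Rightarrow> nat" where
  "pair_partner i = (if even i then Suc i else i - 1)"

text \<open>\<open>skew_diag n k s\<close> is the \<open>n \<times> n\<close> block diagonal matrix with the \<open>2 \<times> 2\<close> blocks
  \<open>[[0, s j], [- s j, 0]]\<close> for \<open>j < k\<close>, padded with zeros.\<close>

definition skew_diag :: "nat \<Rightarrow> nat \<Rightarrow> (nat \<Rightarrow> real) \<Rightarrow> complex mat" where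
  "skew_diag n k s = mat n n (\<lambda>(i,j). if i < 2 * k \<and> j = pair_partner i then
      (if even i then complex_of_real (s (i div 2)) else - complex_of_real (s (i div 2))) else 0)"

lemma skew_diag_dim[simp]: "dim_row (skew_diag n k s) = n" "dim_col (skew_diag n k s) = n"
  by (simp_all add: skew_diag_def)

lemma skew_diag_carrier[simp]: "skew_diag n k s \<in> carrier_mat n n"
  by (simp add: carrier_matI)

lemma skew_diag_seq_cons:
  "skew_diag (2 + n) (Suc k) (seq_cons a s) =
    four_block_mat (skew_diag 2 1 (\<lambda>_. a)) (0\<^sub>m 2 n) (0\<^sub>m n 2) (skew_diag n k s)"
proof (rule eq_matI)
  fix i j assume "i < dim_row (four_block_mat (skew_diag 2 1 (\<lambda>_. a)) (0\<^sub>m 2 n) (0\<^sub>m n 2) (skew_diag n k s))"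
    "j < dim_col (four_block_mat (skew_diag 2 1 (\<lambda>_. a)) (0\<^sub>m 2 n) (0\<^sub>m n 2) (skew_diag n k s))"
  then have i: "i < 2 + n" and j: "j < 2 + n" by auto
  show "skew_diag (2 + n) (Suc k) (seq_cons a s) $$ (i, j) =
      four_block_mat (skew_diag 2 1 (\<lambda>_. a)) (0\<^sub>m 2 n) (0\<^sub>m n 2) (skew_diag n k s) $$ (i, j)"
  proof (cases "i < 2")
    case True
    then show ?thesis using i j by (auto simp: skew_diag_def pair_partner_def seq_cons_def)
  next
    case False
    then obtain i' where i': "i = i' + 2" by (metis add.commute le_Suc_ex not_less)
    have ev: "even i = even i'" "i div 2 = Suc (i' div 2)" and pp: "pair_partner i = pair_partner i' + 2"
      using i' by (auto simp: pair_partner_def)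
    show ?thesis
    proof (cases "j < 2")
      case True
      then show ?thesis using i j False pp by (auto simp: skew_diag_def)
    next
      case False
      then obtain j' where "j = j' + 2" by (metis add.commute le_Suc_ex not_less)
      then show ?thesis using i j i' ev pp by (auto simp: skew_diag_def seq_cons_def)
    qed
  qed
qed auto

lemma skew_diag_pad:
  assumes "2 * k \<le> n"
  shows "skew_diag (n + 1) k s = four_block_mat (skew_diag n k s) (0\<^sub>m n 1) (0\<^sub>m 1 n) (0\<^sub>m 1 1)"
proof (rule eq_matI)
  fix i j assume "i < dim_row (four_block_mat (skew_diag n k s) (0\<^sub>m n 1) (0\<^sub>m 1 n) (0\<^sub>m 1 1))"
    "j < dim_col (four_block_mat (skew_diag n k s) (0\<^sub>m n 1) (0\<^sub>m 1 n) (0\<^sub>m 1 1))"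
  then have i: "i < n + 1" and j: "j < n + 1" by auto
  have "pair_partner i < 2 * k" if "i < 2 * k" using that unfolding pair_partner_def by presburger
  then show "skew_diag (n + 1) k s $$ (i, j) = four_block_mat (skew_diag n k s) (0\<^sub>m n 1) (0\<^sub>m 1 n) (0\<^sub>m 1 1) $$ (i, j)"
    using i j assms by (auto simp: skew_diag_def)
qed auto

lemma cartan_e_TypeII: "cartan_e (TypeII n) = skew_diag n (n div 2) (\<lambda>_. 1)"
proof (rule eq_matI)
  fix i j assume "i < dim_row (skew_diag n (n div 2) (\<lambda>_. 1))" "j < dim_col (skew_diag n (n div 2) (\<lambda>_. 1))"
  then have i: "i < n" and j: "j < n" by auto
  have "(even i \<and> j = i + 1) \<longleftrightarrow> (i < 2 * (n div 2) \<and> j = pair_partner i \<and> even i)"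
    "(even j \<and> i = j + 1) \<longleftrightarrow> (i < 2 * (n div 2) \<and> j = pair_partner i \<and> odd i)"
    using i j unfolding pair_partner_def by presburger+
  then show "cartan_e (TypeII n) $$ (i, j) = skew_diag n (n div 2) (\<lambda>_. 1) $$ (i, j)"
    using i j by (auto simp: skew_diag_def)
qed auto

lemma skew_entry:
  assumes "M \<in> carrier_mat n n" "transpose_mat M = - M" "i < n" "j < n"
  shows "M $$ (i,j) = - M $$ (j,i)"
  using arg_cong[OF assms(2), of "\<lambda>A. A $$ (j,i)"] assms(1,3,4) by simp

lemma eq_neg_self_imp_zero:
  fixes a :: "'a :: {idom, ring_char_0}"
  assumes "a = - a"
  shows "a = 0"
proof -
  have "a + a = 0" using assms by (rule eq_neg_iff_add_eq_0[THEN iffD1])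
  then have "2 * a = 0" by (simp only: mult_2)
  then show ?thesis by simp
qed

lemma skew_diagonal_entry:
  fixes M :: "'a :: {idom, ring_char_0} mat"
  assumes "M \<in> carrier_mat n n" "transpose_mat M = - M" "i < n"
  shows "M $$ (i,i) = 0"
  using eq_neg_self_imp_zero skew_entry[OF assms(1,2,3,3)] by blast

lemma skew_quadratic_form:
  fixes M :: "'a :: {idom, ring_char_0} mat"
  assumes M: "M \<in> carrier_mat n n" and skew: "transpose_mat M = - M" and x: "x \<in> carrier_vec n"
  shows "x \<bullet> (M *\<^sub>v x) = 0"
proof -
  define S where "S = (\<Sum>i<n. \<Sum>j<n. x $ i * M $$ (i,j) * x $ j)"
  have xMx: "x \<bullet> (M *\<^sub>v x) = S"
    using M x by (simp add: S_def scalar_prod_def lessThan_atLeast0 sum_distrib_left algebra_simps)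
  have "S = (\<Sum>j<n. \<Sum>i<n. x $ i * M $$ (i,j) * x $ j)"
    unfolding S_def by (rule sum.swap)
  also have "\<dots> = (\<Sum>j<n. \<Sum>i<n. - (x $ j * M $$ (j,i) * x $ i))"
  proof (intro sum.cong refl)
    fix i j assume "j \<in> {..<n}" "i \<in> {..<n}"
    then have "M $$ (i,j) = - M $$ (j,i)" by (intro skew_entry[OF M skew]) auto
    then show "x $ i * M $$ (i,j) * x $ j = - (x $ j * M $$ (j,i) * x $ i)" by simp
  qed
  also have "\<dots> = - S"
    by (simp add: S_def sum_negf)
  finally have "S = 0" by (rule eq_neg_self_imp_zero)
  then show ?thesis using xMx by simp
qed

lemma skew_map_cnj:
  fixes z :: "complex mat"
  assumes z: "z \<in> carrier_mat n n" and skew: "transpose_mat z = - z"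
  shows "map_mat cnj z = - adj z"
proof (rule eq_matI)
  fix i j assume "i < dim_row (- adj z)" "j < dim_col (- adj z)"
  then have ij: "i < n" "j < n" using z by simp_all
  then have "z $$ (i,j) = - z $$ (j,i)" by (intro skew_entry[OF z skew])
  then show "map_mat cnj z $$ (i,j) = (- adj z) $$ (i,j)" using ij z by simp
qed (use z in auto)

lemma skew_singular_pair_orthogonal:
  fixes z :: "complex mat"
  assumes z: "z \<in> carrier_mat n n" and skew: "transpose_mat z = - z"
    and u: "u \<in> carrier_vec n" and v: "v \<in> carrier_vec n"
    and zu: "adj z *\<^sub>v u = complex_of_real sg \<cdot>\<^sub>v v" and sg: "sg \<noteq> 0"
  shows "u \<bullet> v = 0"
proof -
  have adj_skew: "transpose_mat (adj z) = - adj z"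
    using skew_map_cnj[OF z skew] by (simp add: transpose_adj)
  have "complex_of_real sg * (u \<bullet> v) = u \<bullet> (adj z *\<^sub>v u)"
    using u v by (simp add: zu)
  also have "\<dots> = 0"
    using skew_quadratic_form[of "adj z" n u] z u adj_skew by simp
  finally show ?thesis using sg by simp
qed

lemma skew_singular_pair_dim:
  fixes z :: "complex mat"
  assumes z: "z \<in> carrier_mat n n" and skew: "transpose_mat z = - z"
    and u: "u \<in> carrier_vec n" "u \<bullet>c u = 1" and v: "v \<in> carrier_vec n"
    and zv: "z *\<^sub>v v = complex_of_real sg \<cdot>\<^sub>v u" and sg: "sg \<noteq> 0"
  shows "2 \<le> n"
proof (rule ccontr)
  assume "\<not> 2 \<le> n"
  moreover have "n \<noteq> 0"
  proof
    assume "n = 0"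
    then have "u = 0\<^sub>v n" using u(1) by (intro eq_vecI) auto
    then show False using u(2) by simp
  qed
  ultimately have n1: "n = 1" by simp
  have "(z *\<^sub>v v) $ 0 = z $$ (0,0) * v $ 0"
    using z v n1 by (simp add: scalar_prod_def)
  then have "complex_of_real sg * u $ 0 = 0"
    using zv u skew_diagonal_entry[OF z skew, of 0] n1 by simp
  then have "u = 0\<^sub>v n"
    using sg u n1 by (intro eq_vecI) auto
  then show False using u(2) by simp
qed

lemma exists_youla_vecs:
  fixes z :: "complex mat"
  assumes z: "z \<in> carrier_mat n n" and skew: "transpose_mat z = - z" and n: "0 < n"
  obtains (kernel) u where "u \<in> carrier_vec n" "u \<bullet>c u = 1" "z *\<^sub>v conjugate u = 0\<^sub>v n"
  | (plane) u u' sg where "2 \<le> n" "sg > 0" "orthonormal n [u, u']"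
      "z *\<^sub>v conjugate u = complex_of_real (- sg) \<cdot>\<^sub>v u'" "z *\<^sub>v conjugate u' = complex_of_real sg \<cdot>\<^sub>v u"
proof -
  obtain u v sg where u: "u \<in> carrier_vec n" "u \<bullet>c u = 1" and v: "v \<in> carrier_vec n" "v \<bullet>c v = 1"
    and sg: "sg \<ge> 0" and zv: "z *\<^sub>v v = complex_of_real sg \<cdot>\<^sub>v u"
    and zu: "adj z *\<^sub>v u = complex_of_real sg \<cdot>\<^sub>v v"
    by (rule exists_singular_pair[OF z le_refl n])
  have "map_mat cnj z *\<^sub>v u = - (adj z *\<^sub>v u)"
    unfolding skew_map_cnj[OF z skew] using z u by (simp add: uminus_mult_mat_vec)
  also have "\<dots> = complex_of_real (- sg) \<cdot>\<^sub>v v"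
    unfolding zu by (intro eq_vecI) auto
  finally have zcu: "z *\<^sub>v conjugate u = complex_of_real (- sg) \<cdot>\<^sub>v conjugate v"
    using mult_conjugate_vec[OF z u(1)] by (simp add: conjugate_smult_vec)
  show ?thesis
  proof (cases "sg = 0")
    case True
    then show ?thesis using kernel[OF u] zcu v by simp
  next
    case False
    then have sg_pos: "sg > 0" using sg by simp
    have uv: "u \<bullet>c conjugate v = 0"
      using skew_singular_pair_orthogonal[OF z skew u(1) v(1) zu False] by simp
    moreover have "conjugate v \<bullet>c u = 0"
      using conjugate_sprod_vec[OF v(1) u(1)] comm_scalar_prod[OF u(1) v(1)]
        skew_singular_pair_orthogonal[OF z skew u(1) v(1) zu False] by simp
    moreover have "conjugate v \<bullet>c conjugate v = 1"
      using v cscalar_conjugate[of v v] by simp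
    moreover have "u \<noteq> conjugate v" using u(2) uv by auto
    ultimately have "orthonormal n [u, conjugate v]"
      using u v by (auto simp: orthonormal_def)
    then show ?thesis
      using plane[OF skew_singular_pair_dim[OF z skew u v(1) zv False] sg_pos _ zcu] zv by simp
  qed
qed

lemma ul_block_uminus:
  "k \<le> dim_row A \<Longrightarrow> l \<le> dim_col A \<Longrightarrow> ul_block k l (- A) = - ul_block k l A"
  by (rule eq_matI) (auto simp: ul_block_def)

lemma lr_block_uminus: "lr_block k l (- A) = - lr_block k l A"
  by (rule eq_matI) (auto simp: lr_block_def)

lemma youla_deflation_kernel:
  fixes z :: "complex mat"
  assumes z: "z \<in> carrier_mat (m + 1) (m + 1)" and skew: "transpose_mat z = - z"
    and u: "u \<in> carrier_vec (m + 1)" "u \<bullet>c u = 1" "z *\<^sub>v conjugate u = 0\<^sub>v (m + 1)"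
  obtains W A where "unitary_mat (m + 1) W" "A \<in> carrier_mat m m" "transpose_mat A = - A"
    "z = W * four_block_mat A (0\<^sub>m m 1) (0\<^sub>m 1 m) (0\<^sub>m 1 1) * transpose_mat W"
proof -
  obtain ws where ws: "orthonormal (m + 1) ([u] @ ws)" "length ([u] @ ws) = m + 1"
    using orthonormal_extend[of "m + 1" "[u]"] u by (auto simp: orthonormal_def)
  txt \<open>The kernel direction is put last, so that it splits off in the lower right corner.\<close>
  define us where "us = ws @ [u]"
  have us: "orthonormal (m + 1) us" "length us = m + 1" "us ! m = u"
    using ws orthonormal_perm[OF _ _ ws(1), of us] by (auto simp: us_def orthonormal_def nth_append)
  have us_c: "set us \<subseteq> carrier_vec (m + 1)" using us(1) by (simp add: orthonormal_def)
  obtain W z' where W: "unitary_mat (m + 1) W" and z': "z' \<in> carrier_mat (m + 1) (m + 1)"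
    and zW: "z = W * z' * transpose_mat W"
    and entries: "\<And>i j. i < m + 1 \<Longrightarrow> j < m + 1 \<Longrightarrow> z' $$ (i,j) = (z *\<^sub>v conjugate (us ! j)) \<bullet>c us ! i"
    and z'_skew: "transpose_mat z' = - z'"
    by (rule congruence_by_orthonormal_basis[OF us(1,2) z]) (use skew in blast)+
  have col: "z' $$ (i, m) = 0" if i: "i < m + 1" for i
  proof -
    have "us ! i \<in> carrier_vec (m + 1)" using us_c us(2) i by (metis nth_mem subsetD)
    then show ?thesis using entries[OF i, of m] us(3) u(3) by simp
  qed
  have row: "z' $$ (m, j) = 0" if "j < m + 1" for j
    using skew_entry[OF z' z'_skew, of m j] col[OF that] that by simp
  have "z' = four_block_mat (ul_block m m z') (0\<^sub>m m 1) (0\<^sub>m 1 m) (lr_block m m z')"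
  proof (rule four_block_split[OF z'])
    fix i j assume "i < m + 1" "j < m + 1" "(i < m) \<noteq> (j < m)"
    then have "i = m \<and> j < m + 1 \<or> j = m \<and> i < m + 1" by auto
    then show "z' $$ (i, j) = 0" using col row by auto
  qed
  moreover have "lr_block m m z' = 0\<^sub>m 1 1"
    by (rule eq_matI) (use z' row in \<open>auto simp: lr_block_def\<close>)
  moreover have "transpose_mat (ul_block m m z') = - ul_block m m z'"
    using transpose_ul_block[OF z'] z'_skew ul_block_uminus[of m z' m] z' by simp
  ultimately show ?thesis
    using that[OF W ul_block_carrier] zW by metis
qed

lemma youla_deflation_plane:
  fixes z :: "complex mat"
  assumes z: "z \<in> carrier_mat (2 + m) (2 + m)" and skew: "transpose_mat z = - z"
    and uu': "orthonormal (2 + m) [u, u']"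
    and zu: "z *\<^sub>v conjugate u = complex_of_real (- sg) \<cdot>\<^sub>v u'"
    and zu': "z *\<^sub>v conjugate u' = complex_of_real sg \<cdot>\<^sub>v u"
  obtains W B where "unitary_mat (2 + m) W" "B \<in> carrier_mat m m" "transpose_mat B = - B"
    "z = W * four_block_mat (skew_diag 2 1 (\<lambda>_. sg)) (0\<^sub>m 2 m) (0\<^sub>m m 2) B * transpose_mat W"
proof -
  obtain ws where ws: "orthonormal (2 + m) (u # u' # ws)" "length (u # u' # ws) = 2 + m"
    using orthonormal_extend[OF uu'] by auto
  let ?us = "u # u' # ws"
  obtain W z' where W: "unitary_mat (2 + m) W" and z': "z' \<in> carrier_mat (2 + m) (2 + m)"
    and zW: "z = W * z' * transpose_mat W"
    and entries: "\<And>i j. i < 2 + m \<Longrightarrow> j < 2 + m \<Longrightarrow> z' $$ (i,j) = (z *\<^sub>v conjugate (?us ! j)) \<bullet>c ?us ! i"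
    and z'_skew: "transpose_mat z' = - z'"
    by (rule congruence_by_orthonormal_basis[OF ws z]) (use skew in blast)+
  have cols: "z' $$ (i, 0) = (if i = 1 then complex_of_real (- sg) else 0)"
    "z' $$ (i, 1) = (if i = 0 then complex_of_real sg else 0)" if i: "i < 2 + m" for i
  proof -
    have c: "?us ! i \<in> carrier_vec (2 + m)" "u \<in> carrier_vec (2 + m)" "u' \<in> carrier_vec (2 + m)"
      using ws i nth_mem[of i ?us] by (auto simp: orthonormal_def simp del: nth_mem)
    show "z' $$ (i, 0) = (if i = 1 then complex_of_real (- sg) else 0)"
      using entries[OF i, of 0] zu c orthonormal_nth[OF ws(1), of 1 i] ws(2) i by (simp add: cscalar_smult_left)
    show "z' $$ (i, 1) = (if i = 0 then complex_of_real sg else 0)"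
      using entries[OF i, of 1] zu' c orthonormal_nth[OF ws(1), of 0 i] ws(2) i by (simp add: cscalar_smult_left)
  qed
  have low: "z' $$ (i, j) = 0" if "i < 2 + m" "j < 2" "\<not> i < 2" for i j
    using cols[OF that(1)] that(2,3) less_2_cases[of j] by auto
  have "z' = four_block_mat (ul_block 2 2 z') (0\<^sub>m 2 m) (0\<^sub>m m 2) (lr_block 2 2 z')"
  proof (rule four_block_split[OF z'])
    fix i j assume ij: "i < 2 + m" "j < 2 + m" "(i < 2) \<noteq> (j < 2)"
    then show "z' $$ (i, j) = 0"
      using skew_entry[OF z' z'_skew, of i j] low[of i j] low[of j i] by (cases "i < 2") auto
  qed
  moreover have "ul_block 2 2 z' = skew_diag 2 1 (\<lambda>_. sg)"
  proof (rule eq_matI)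
    fix i j assume "i < dim_row (skew_diag 2 1 (\<lambda>_. sg))" "j < dim_col (skew_diag 2 1 (\<lambda>_. sg))"
    then have "i = 0 \<or> i = 1" "j = 0 \<or> j = 1" by auto
    then show "ul_block 2 2 z' $$ (i, j) = skew_diag 2 1 (\<lambda>_. sg) $$ (i, j)"
      using cols[of i] by (auto simp: ul_block_def skew_diag_def pair_partner_def)
  qed (auto simp: ul_block_def)
  moreover have "transpose_mat (lr_block 2 2 z') = - lr_block 2 2 z'"
    using transpose_lr_block[OF z'] z'_skew lr_block_uminus[of 2 2 z'] by simp
  ultimately show ?thesis
    using that[OF W lr_block_carrier[OF z']] zW by metis
qed

lemma youla_step_kernel:
  fixes z :: "complex mat"
  assumes z: "z \<in> carrier_mat (m + 1) (m + 1)" and skew: "transpose_mat z = - z"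
    and u: "u \<in> carrier_vec (m + 1)" "u \<bullet>c u = 1" "z *\<^sub>v conjugate u = 0\<^sub>v (m + 1)"
    and IH: "\<And>A. A \<in> carrier_mat m m \<Longrightarrow> transpose_mat A = - A \<Longrightarrow>
      \<exists>U k s. unitary_mat m U \<and> 2 * k \<le> m \<and> (\<forall>j. s j > 0) \<and> A = U * skew_diag m k s * transpose_mat U"
  shows "\<exists>U k s. unitary_mat (m + 1) U \<and> 2 * k \<le> m + 1 \<and> (\<forall>j. s j > 0) \<and>
    z = U * skew_diag (m + 1) k s * transpose_mat U"
proof -
  obtain W A where W: "unitary_mat (m + 1) W" "A \<in> carrier_mat m m" "transpose_mat A = - A"
    and zW: "z = W * four_block_mat A (0\<^sub>m m 1) (0\<^sub>m 1 m) (0\<^sub>m 1 1) * transpose_mat W"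
    by (rule youla_deflation_kernel[OF z skew u])
  obtain UA k s where A: "unitary_mat m UA" "2 * k \<le> m" "\<forall>j. s j > 0"
    "A = UA * skew_diag m k s * transpose_mat UA"
    using IH[OF W(2,3)] by blast
  obtain U where "unitary_mat (m + 1) U"
    "z = U * four_block_mat (skew_diag m k s) (0\<^sub>m m 1) (0\<^sub>m 1 m) (0\<^sub>m 1 1) * transpose_mat U"
    using unitary_four_block_congruence[OF W(1) A(1) unitary_one, of "skew_diag m k s" "0\<^sub>m 1 1"]
      zW A(4) by auto
  then show ?thesis
    using skew_diag_pad[OF A(2)] A(2,3) by (intro exI[of _ U] exI[of _ k] exI[of _ s]) auto
qed

lemma youla_step_plane:
  fixes z :: "complex mat"
  assumes z: "z \<in> carrier_mat (2 + m) (2 + m)" and skew: "transpose_mat z = - z"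
    and uu': "orthonormal (2 + m) [u, u']" and sg: "sg > 0"
    and zu: "z *\<^sub>v conjugate u = complex_of_real (- sg) \<cdot>\<^sub>v u'"
    and zu': "z *\<^sub>v conjugate u' = complex_of_real sg \<cdot>\<^sub>v u"
    and IH: "\<And>B. B \<in> carrier_mat m m \<Longrightarrow> transpose_mat B = - B \<Longrightarrow>
      \<exists>U k s. unitary_mat m U \<and> 2 * k \<le> m \<and> (\<forall>j. s j > 0) \<and> B = U * skew_diag m k s * transpose_mat U"
  shows "\<exists>U k s. unitary_mat (2 + m) U \<and> 2 * k \<le> 2 + m \<and> (\<forall>j. s j > 0) \<and>
    z = U * skew_diag (2 + m) k s * transpose_mat U"
proof -
  obtain W B where W: "unitary_mat (2 + m) W" "B \<in> carrier_mat m m" "transpose_mat B = - B"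
    and zW: "z = W * four_block_mat (skew_diag 2 1 (\<lambda>_. sg)) (0\<^sub>m 2 m) (0\<^sub>m m 2) B * transpose_mat W"
    by (rule youla_deflation_plane[OF z skew uu' zu zu'])
  obtain UB k s where B: "unitary_mat m UB" "2 * k \<le> m" "\<forall>j. s j > 0"
    "B = UB * skew_diag m k s * transpose_mat UB"
    using IH[OF W(2,3)] by blast
  obtain U where "unitary_mat (2 + m) U"
    "z = U * four_block_mat (skew_diag 2 1 (\<lambda>_. sg)) (0\<^sub>m 2 m) (0\<^sub>m m 2) (skew_diag m k s) * transpose_mat U"
    using unitary_four_block_congruence[OF W(1) unitary_one B(1), of "skew_diag 2 1 (\<lambda>_. sg)" "skew_diag m k s"]
      zW B(4) by auto
  moreover have "\<forall>j. seq_cons sg s j > 0" using B(3) sg by (simp add: seq_cons_def)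
  ultimately show ?thesis
    using skew_diag_seq_cons[of m k sg s] B(2)
    by (intro exI[of _ U] exI[of _ "Suc k"] exI[of _ "seq_cons sg s"]) auto
qed

theorem youla_decomposition:
  fixes z :: "complex mat"
  assumes "z \<in> carrier_mat n n" "transpose_mat z = - z"
  shows "\<exists>U k s. unitary_mat n U \<and> 2 * k \<le> n \<and> (\<forall>j. s j > 0) \<and> z = U * skew_diag n k s * transpose_mat U"
  using assms
proof (induct n arbitrary: z rule: less_induct)
  case (less n)
  note z = less(2) and skew = less(3)
  show ?case
  proof (cases "n = 0")
    case True
    have "z = 1\<^sub>m 0 * skew_diag 0 0 (\<lambda>_. 1) * transpose_mat (1\<^sub>m 0)"
      by (rule eq_matI) (use z True in auto)
    then show ?thesis
      using True unitary_one[of 0] by (intro exI[of _ "1\<^sub>m 0"] exI[of _ 0] exI[of _ "\<lambda>_. 1"]) auto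
  next
    case False
    then have n: "0 < n" by simp
    show ?thesis
    proof (cases rule: exists_youla_vecs[OF z skew n, case_names kernel plane])
      case (kernel u)
      obtain m where m: "n = m + 1" using False by (cases n) auto
      show ?thesis
        using youla_step_kernel[of z m u] z skew kernel less(1)[of m] m by simp
    next
      case (plane u u' sg)
      obtain m where m: "n = 2 + m" using plane(1) by (metis le_Suc_ex)
      show ?thesis
        using youla_step_plane[of z m u u' sg] z skew plane less(1)[of m] m by simp
    qed
  qed
qed

section \<open>The Jordan triple determinant on normal forms\<close>

lemma det_diag_mat:
  fixes d :: "nat \<Rightarrow> 'a :: comm_ring_1"
  shows "det (mat n n (\<lambda>(i,j). if i = j then d i else 0)) = (\<Prod>i<n. d i)"
proof -
  have "det (mat n n (\<lambda>(i,j). if i = j then d i else 0)) = prod_list (map d [0..<n])"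
    by (subst det_upper_triangular[of _ n]) (auto simp: diag_mat_def intro!: arg_cong[of _ _ prod_list])
  then show ?thesis
    by (simp add: prod.distinct_set_conv_list[symmetric] lessThan_atLeast0)
qed

lemma det_one_minus_unitary_conj: fixes U M :: "complex mat"
  assumes U: "unitary_mat m U" and M: "M \<in> carrier_mat m m"
  shows "det (1\<^sub>m m - a \<cdot>\<^sub>m (U * M * adj U)) = det (1\<^sub>m m - a \<cdot>\<^sub>m M)"
proof -
  have cU: "U \<in> carrier_mat m m" using U by (rule unitary_carrier)
  have aU: "adj U \<in> carrier_mat m m" using cU by simp
  have UM: "U * M \<in> carrier_mat m m" using cU M by simp
  have aM: "a \<cdot>\<^sub>m M \<in> carrier_mat m m" using M by simp
  have "U * (1\<^sub>m m - a \<cdot>\<^sub>m M) = U * 1\<^sub>m m - U * (a \<cdot>\<^sub>m M)"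
    by (rule mult_minus_distrib_mat[OF cU one_carrier_mat aM])
  also have "\<dots> = U - a \<cdot>\<^sub>m (U * M)" using cU M by (simp add: mult_smult_distrib)
  finally have e1: "U * (1\<^sub>m m - a \<cdot>\<^sub>m M) = U - a \<cdot>\<^sub>m (U * M)" .
  have "(U - a \<cdot>\<^sub>m (U * M)) * adj U = U * adj U - (a \<cdot>\<^sub>m (U * M)) * adj U"
    by (rule minus_mult_distrib_mat[OF cU _ aU], insert UM, simp)
  also have "\<dots> = 1\<^sub>m m - a \<cdot>\<^sub>m (U * M * adj U)" using U UM aU
    by (simp add: unitary_mat_def mult_smult_assoc_mat[OF UM aU])
  finally have e2: "U * (1\<^sub>m m - a \<cdot>\<^sub>m M) * adj U = 1\<^sub>m m - a \<cdot>\<^sub>m (U * M * adj U)" using e1 by simp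
  have X: "1\<^sub>m m - a \<cdot>\<^sub>m M \<in> carrier_mat m m" using minus_carrier_mat[OF aM] .
  have UX: "U * (1\<^sub>m m - a \<cdot>\<^sub>m M) \<in> carrier_mat m m" using cU X by simp
  have "det (U * (1\<^sub>m m - a \<cdot>\<^sub>m M) * adj U) = det U * det (1\<^sub>m m - a \<cdot>\<^sub>m M) * det (adj U)"
    using det_mult[OF UX aU] det_mult[OF cU X] by simp
  also have "\<dots> = det (1\<^sub>m m - a \<cdot>\<^sub>m M) * det (U * adj U)" using det_mult[OF cU aU] by simp
  also have "det (U * adj U) = 1" using U by (simp add: unitary_mat_def)
  finally show ?thesis using e2 by simp
qed

lemma gram_unitary_right: fixes U D V :: "complex mat"
  assumes U: "U \<in> carrier_mat m m" and D: "D \<in> carrier_mat m n" and V: "unitary_mat n V"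
  shows "(U * D * V) * adj (U * D * V) = U * (D * adj D) * adj U"
proof -
  have cV: "V \<in> carrier_mat n n" using V by (rule unitary_carrier)
  have UD: "U * D \<in> carrier_mat m n" using U D by simp
  have aU: "adj U \<in> carrier_mat m m" and aD: "adj D \<in> carrier_mat n m" and aV: "adj V \<in> carrier_mat n n"
    using U D cV by auto
  have aDU: "adj D * adj U \<in> carrier_mat n m" using aD aU by simp
  have "adj (U * D * V) = adj V * adj (U * D)" by (rule adj_mult[OF UD cV])
  also have "adj (U * D) = adj D * adj U" by (rule adj_mult[OF U D])
  finally have a: "adj (U * D * V) = adj V * (adj D * adj U)" .
  have "(U * D * V) * (adj V * (adj D * adj U)) = (U * D) * (V * (adj V * (adj D * adj U)))"
  proof -
    have X: "adj V * (adj D * adj U) \<in> carrier_mat n m" using aV aDU by simp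
    show ?thesis by (rule assoc_mult_mat[OF UD cV X])
  qed
  also have "V * (adj V * (adj D * adj U)) = (V * adj V) * (adj D * adj U)"
    by (rule assoc_mult_mat[OF cV aV aDU, symmetric])
  also have "V * adj V = 1\<^sub>m n" using V by (simp add: unitary_mat_def)
  also have "1\<^sub>m n * (adj D * adj U) = adj D * adj U" using left_mult_one_mat[OF aDU] .
  also have "(U * D) * (adj D * adj U) = U * (D * (adj D * adj U))" by (rule assoc_mult_mat[OF U D aDU])
  also have "D * (adj D * adj U) = D * adj D * adj U" by (rule assoc_mult_mat[OF D aD aU, symmetric])
  also have "U * (D * adj D * adj U) = U * (D * adj D) * adj U"
    by (rule assoc_mult_mat[OF U _ aU, symmetric], insert D aD, simp)
  finally show ?thesis using a by simp
qed

definition sval_poly :: "nat \<Rightarrow> (nat \<Rightarrow> real) \<Rightarrow> complex poly" where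
  "sval_poly k s = (\<Prod>i<k. [:1, - complex_of_real ((s i)\<^sup>2):])"

lemma poly_sval_poly: "poly (sval_poly k s) a = (\<Prod>i<k. 1 - a * complex_of_real ((s i)\<^sup>2))"
  by (simp add: sval_poly_def poly_prod algebra_simps)

lemma rect_diag_gram: assumes "m \<le> n"
  shows "rect_diag m n s * adj (rect_diag m n s) = mat m m (\<lambda>(i,j). if i = j then complex_of_real ((s i)\<^sup>2) else 0)"
proof (rule eq_matI)
  fix i j assume "i < dim_row (mat m m (\<lambda>(i,j). if i = j then complex_of_real ((s i)\<^sup>2) else 0))"
     "j < dim_col (mat m m (\<lambda>(i,j). if i = j then complex_of_real ((s i)\<^sup>2) else 0))"
  then have ij: "i < m" "j < m" by auto
  have "(rect_diag m n s * adj (rect_diag m n s)) $$ (i,j) = (\<Sum>l\<in>{0..<n}. rect_diag m n s $$ (i,l) * cnj (rect_diag m n s $$ (j,l)))"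
    using ij by (simp add: scalar_prod_def row_def col_def rect_diag_def)
  also have "\<dots> = (\<Sum>l\<in>{0..<n}. if l = i then (if j = i then complex_of_real (s i) * complex_of_real (s i) else 0) else 0)"
    using ij assms by (intro sum.cong refl, auto simp: rect_diag_def)
  also have "\<dots> = (if i = j then complex_of_real ((s i)\<^sup>2) else 0)"
    using ij assms by (simp add: power2_eq_square)
  finally show "(rect_diag m n s * adj (rect_diag m n s)) $$ (i,j) = mat m m (\<lambda>(i,j). if i = j then complex_of_real ((s i)\<^sup>2) else 0) $$ (i,j)"
    using ij by simp
qed (auto simp: rect_diag_def)

lemma pair_partner_inj: "pair_partner i = pair_partner j \<Longrightarrow> i = j"
  unfolding pair_partner_def by presburger

lemma pair_partner_less: "i < 2 * k \<Longrightarrow> pair_partner i < 2 * k"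
  unfolding pair_partner_def by presburger

lemma skew_diag_gram: assumes "2 * k \<le> n"
  shows "skew_diag n k s * adj (skew_diag n k s) =
    mat n n (\<lambda>(i,j). if i = j then (if i < 2 * k then complex_of_real ((s (i div 2))\<^sup>2) else 0) else 0)"
proof (rule eq_matI)
  fix i j
  assume "i < dim_row (mat n n (\<lambda>(i,j). if i = j then (if i < 2 * k then complex_of_real ((s (i div 2))\<^sup>2) else 0) else 0))"
    "j < dim_col (mat n n (\<lambda>(i,j). if i = j then (if i < 2 * k then complex_of_real ((s (i div 2))\<^sup>2) else 0) else 0))"
  then have ij: "i < n" "j < n" by auto
  define sg where "sg = (\<lambda>i. if even i then complex_of_real (s (i div 2)) else - complex_of_real (s (i div 2)))"
  have Y: "skew_diag n k s $$ (a,b) = (if a < 2 * k \<and> b = pair_partner a then sg a else 0)" if "a < n" "b < n" for a b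
    using that by (simp add: skew_diag_def sg_def)
  have "(skew_diag n k s * adj (skew_diag n k s)) $$ (i,j) = (\<Sum>l\<in>{0..<n}. skew_diag n k s $$ (i,l) * cnj (skew_diag n k s $$ (j,l)))"
    using ij by (simp add: scalar_prod_def row_def col_def)
  also have "\<dots> = (\<Sum>l\<in>{0..<n}. if l = pair_partner i then (if i < 2 * k \<and> j = i then sg i * cnj (sg i) else 0) else 0)"
  proof (intro sum.cong refl)
    fix l assume l: "l \<in> {0..<n}"
    show "skew_diag n k s $$ (i,l) * cnj (skew_diag n k s $$ (j,l)) = (if l = pair_partner i then (if i < 2 * k \<and> j = i then sg i * cnj (sg i) else 0) else 0)"
      using l ij Y[of i l] Y[of j l] pair_partner_inj[of i j] by auto
  qed
  also have "\<dots> = (if i < 2 * k \<and> j = i then sg i * cnj (sg i) else 0)"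
    using pair_partner_less[of i k] assms by auto
  also have "\<dots> = (if i = j \<and> i < 2 * k then complex_of_real ((s (i div 2))\<^sup>2) else 0)"
    by (auto simp: sg_def power2_eq_square)
  finally show "(skew_diag n k s * adj (skew_diag n k s)) $$ (i,j) =
      mat n n (\<lambda>(i,j). if i = j then (if i < 2 * k then complex_of_real ((s (i div 2))\<^sup>2) else 0) else 0) $$ (i,j)"
    using ij by simp
qed auto

lemma prod_pairs: fixes f :: "nat \<Rightarrow> 'a :: comm_monoid_mult"
  shows "(\<Prod>i<2 * k. f (i div 2)) = (\<Prod>j<k. f j)\<^sup>2"
proof (induct k)
  case (Suc k)
  have "2 * Suc k = Suc (Suc (2 * k))" by simp
  then have "(\<Prod>i<2 * Suc k. f (i div 2)) = (\<Prod>i<2 * k. f (i div 2)) * f k * f k"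
    by (simp add: mult.assoc)
  then show ?case using Suc by (simp add: power2_eq_square algebra_simps)
qed simp

lemma prod_pairs_padded: fixes f :: "nat \<Rightarrow> 'a :: comm_monoid_mult"
  assumes "2 * k \<le> n"
  shows "(\<Prod>i<n. if i < 2 * k then f (i div 2) else 1) = (\<Prod>j<k. f j)\<^sup>2"
proof -
  have "(\<Prod>i<n. if i < 2 * k then f (i div 2) else 1) = (\<Prod>i<2 * k. if i < 2 * k then f (i div 2) else 1)"
    using assms by (intro prod.mono_neutral_right, auto)
  also have "\<dots> = (\<Prod>i<2 * k. f (i div 2))" by simp
  finally show ?thesis using prod_pairs by simp
qed

lemma det_one_minus_smult_diag:
  fixes d :: "nat \<Rightarrow> 'a :: comm_ring_1"
  shows "det (1\<^sub>m n - a \<cdot>\<^sub>m mat n n (\<lambda>(i,j). if i = j then d i else 0)) = (\<Prod>i<n. 1 - a * d i)"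
proof -
  have "1\<^sub>m n - a \<cdot>\<^sub>m mat n n (\<lambda>(i,j). if i = j then d i else 0) = mat n n (\<lambda>(i,j). if i = j then 1 - a * d i else 0)"
    by (rule eq_matI) auto
  then show ?thesis by (simp add: det_diag_mat)
qed

lemma det_gram_svd:
  fixes U V :: "complex mat"
  assumes U: "unitary_mat m U" and V: "unitary_mat n V" and mn: "m \<le> n" and z: "z = U * rect_diag m n s * V"
  shows "det (1\<^sub>m m - (a \<cdot>\<^sub>m z) * adj z) = poly (sval_poly m s) a"
proof -
  have cU: "U \<in> carrier_mat m m" and cV: "V \<in> carrier_mat n n" using U V by (auto simp: unitary_carrier)
  have zc: "z \<in> carrier_mat m n" using z mult_carrier_mat[OF mult_carrier_mat[OF cU rect_diag_carrier] cV] by simp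
  have DD: "rect_diag m n s * adj (rect_diag m n s) \<in> carrier_mat m m"
    using mult_carrier_mat[OF rect_diag_carrier adj_carrier_mat[OF rect_diag_carrier]] .
  have "(a \<cdot>\<^sub>m z) * adj z = a \<cdot>\<^sub>m (U * (rect_diag m n s * adj (rect_diag m n s)) * adj U)"
    using mult_smult_assoc_mat[OF zc adj_carrier_mat[OF zc]] gram_unitary_right[OF cU rect_diag_carrier V] z
    by simp
  then have "det (1\<^sub>m m - (a \<cdot>\<^sub>m z) * adj z) = det (1\<^sub>m m - a \<cdot>\<^sub>m (rect_diag m n s * adj (rect_diag m n s)))"
    using det_one_minus_unitary_conj[OF U DD] by simp
  also have "\<dots> = (\<Prod>i<m. 1 - a * complex_of_real ((s i)\<^sup>2))"
    unfolding rect_diag_gram[OF mn] by (rule det_one_minus_smult_diag)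
  finally show ?thesis by (simp add: poly_sval_poly)
qed

lemma det_gram_youla:
  fixes U :: "complex mat"
  assumes U: "unitary_mat n U" and kn: "2 * k \<le> n" and z: "z = U * skew_diag n k s * transpose_mat U"
  shows "det (1\<^sub>m n - (a \<cdot>\<^sub>m z) * adj z) = (poly (sval_poly k s) a)\<^sup>2"
proof -
  have cU: "U \<in> carrier_mat n n" using U by (rule unitary_carrier)
  have zc: "z \<in> carrier_mat n n"
    using z mult_carrier_mat[OF mult_carrier_mat[OF cU skew_diag_carrier] transpose_carrier_mat[THEN iffD2, OF cU]]
    by simp
  have DD: "skew_diag n k s * adj (skew_diag n k s) \<in> carrier_mat n n"
    using mult_carrier_mat[OF skew_diag_carrier adj_carrier_mat[OF skew_diag_carrier]] .
  have "(a \<cdot>\<^sub>m z) * adj z = a \<cdot>\<^sub>m (U * (skew_diag n k s * adj (skew_diag n k s)) * adj U)"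
    using mult_smult_assoc_mat[OF zc adj_carrier_mat[OF zc]]
      gram_unitary_right[OF cU skew_diag_carrier unitary_transpose[OF U]] z
    by simp
  then have "det (1\<^sub>m n - (a \<cdot>\<^sub>m z) * adj z) = det (1\<^sub>m n - a \<cdot>\<^sub>m (skew_diag n k s * adj (skew_diag n k s)))"
    using det_one_minus_unitary_conj[OF U DD] by simp
  also have "\<dots> = (\<Prod>i<n. 1 - a * (if i < 2 * k then complex_of_real ((s (i div 2))\<^sup>2) else 0))"
    unfolding skew_diag_gram[OF kn] by (rule det_one_minus_smult_diag)
  also have "\<dots> = (\<Prod>i<n. if i < 2 * k then (\<lambda>j. 1 - a * complex_of_real ((s j)\<^sup>2)) (i div 2) else 1)"
    by (intro prod.cong refl) auto
  also have "\<dots> = (\<Prod>j<k. 1 - a * complex_of_real ((s j)\<^sup>2))\<^sup>2"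
    by (rule prod_pairs_padded[OF kn])
  finally show ?thesis by (simp add: poly_sval_poly)
qed

lemma Delta_poly_TypeI_svd:
  assumes "unitary_mat m U" "unitary_mat n V" "m \<le> n" "z = U * rect_diag m n s * V"
  shows "Delta_poly (TypeI m n) z z = sval_poly m s"
  unfolding Delta_poly.simps
  by (rule the_equality) (use det_gram_svd[OF assms] in \<open>auto simp: poly_eq_poly_eq_iff[symmetric]\<close>)

lemma Delta_poly_TypeIII_takagi:
  assumes U: "unitary_mat n U" and z: "z = U * rect_diag n n s * transpose_mat U"
  shows "Delta_poly (TypeIII n) z z = sval_poly n s"
  unfolding Delta_poly.simps
  by (rule the_equality)
    (use det_gram_svd[OF U unitary_transpose[OF U] le_refl z] in \<open>auto simp: poly_eq_poly_eq_iff[symmetric]\<close>)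

text \<open>For type II, \<open>Delta_poly\<close> is the square root of \<open>det (1 - \<lambda> z * adj z)\<close> normalized at \<open>0\<close>;
  the normalization makes it unique.\<close>

lemma poly_eq_if_squares_eq:
  fixes p q :: "'a :: {idom, ring_char_0} poly"
  assumes p0: "poly p 0 = 1" and q0: "poly q 0 = 1" and sq: "\<And>a. (poly p a)\<^sup>2 = (poly q a)\<^sup>2"
  shows "p = q"
proof -
  have "poly (p ^ 2) = poly (q ^ 2)" using sq by (simp add: fun_eq_iff)
  then have "p ^ 2 = q ^ 2" by (simp only: poly_eq_poly_eq_iff)
  then have "(p - q) * (p + q) = 0" by (simp add: power2_eq_square algebra_simps)
  moreover have "p + q \<noteq> 0"
  proof
    assume "p + q = 0"
    then have "poly (p + q) 0 = 0" by simp
    with p0 q0 show False by simp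
  qed
  ultimately show ?thesis by simp
qed

lemma Delta_poly_TypeII_youla:
  assumes U: "unitary_mat n U" and kn: "2 * k \<le> n" and z: "z = U * skew_diag n k s * transpose_mat U"
  shows "Delta_poly (TypeII n) z z = sval_poly k s"
proof -
  have sq: "(poly (sval_poly k s) a)\<^sup>2 = det (1\<^sub>m n - (a \<cdot>\<^sub>m z) * adj z)" for a
    using det_gram_youla[OF assms] by simp
  have "poly (sval_poly k s) 0 = 1" by (simp add: poly_sval_poly)
  then show ?thesis
    unfolding Delta_poly.simps using sq by (intro the_equality) (auto intro: poly_eq_if_squares_eq)
qed

section \<open>Matching the coefficients with those of \<open>(1 - X) ^ r\<close>\<close>

lemma coeff_one_minus_X_power:
  "coeff ([:1, -1:] ^ r :: 'a :: comm_ring_1 poly) l = (-1) ^ l * of_nat (r choose l)"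
proof (cases "l \<le> r")
  case True
  then show ?thesis by (simp add: coeff_linear_poly_power)
next
  case False
  have "degree ([:1, -1:] ^ r :: 'a poly) \<le> r"
    by (rule order.trans[OF degree_power_le]) simp
  then show ?thesis using False by (simp add: coeff_eq_0 binomial_eq_0)
qed

lemma eq_one_minus_X_power_iff:
  fixes p :: "'a :: comm_ring_1 poly"
  assumes deg: "degree p \<le> r" and c0: "coeff p 0 = 1"
  shows "p = [:1, -1:] ^ r \<longleftrightarrow> (\<forall>l. 1 \<le> l \<and> l \<le> r \<longrightarrow> (-1) ^ l * coeff p l = of_nat (r choose l))"
proof
  assume "p = [:1, -1:] ^ r"
  then show "\<forall>l. 1 \<le> l \<and> l \<le> r \<longrightarrow> (-1) ^ l * coeff p l = of_nat (r choose l)"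
    by (simp add: coeff_one_minus_X_power)
next
  assume cl: "\<forall>l. 1 \<le> l \<and> l \<le> r \<longrightarrow> (-1) ^ l * coeff p l = of_nat (r choose l)"
  show "p = [:1, -1:] ^ r"
  proof (rule poly_eqI)
    fix l
    consider "l = 0" | "1 \<le> l" "l \<le> r" | "r < l" by linarith
    then show "coeff p l = coeff ([:1, -1:] ^ r) l"
    proof cases
      case 2
      have "coeff p l = (-1) ^ l * ((-1) ^ l * coeff p l)" by simp
      then show ?thesis using cl 2 by (simp add: coeff_one_minus_X_power)
    next
      case 3
      then show ?thesis using deg by (simp add: coeff_one_minus_X_power coeff_eq_0 binomial_eq_0)
    qed (simp add: c0 coeff_one_minus_X_power)
  qed
qed

lemma degree_sval_poly: "degree (sval_poly k s) \<le> k"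
proof -
  have "degree (sval_poly k s) \<le> (\<Sum>i<k. degree [:1, - complex_of_real ((s i)\<^sup>2):])"
    unfolding sval_poly_def using degree_prod_sum_le[of "{..<k}" "\<lambda>i. [:1, - complex_of_real ((s i)\<^sup>2):]"]
    by (simp add: o_def)
  also have "\<dots> \<le> (\<Sum>i<k. 1)" by (intro sum_mono) simp
  finally show ?thesis by simp
qed

lemma coeff_0_sval_poly: "coeff (sval_poly k s) 0 = 1"
  by (simp add: poly_0_coeff_0[symmetric] poly_sval_poly)

lemma sval_poly_one: "sval_poly k (\<lambda>_. 1) = [:1, -1:] ^ k"
  by (simp add: sval_poly_def)

lemma coeff_prod_linear_top:
  fixes c :: "nat \<Rightarrow> 'a :: comm_ring_1"
  shows "coeff (\<Prod>i<k. [:1, c i:]) k = (\<Prod>i<k. c i)"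
proof -
  have "coeff (\<Prod>i<k. [:1, c i:]) k = (\<Prod>i<k. c i) \<and> degree (\<Prod>i<k. [:1, c i:]) \<le> k"
  proof (induct k)
    case (Suc k)
    let ?q = "\<Prod>i<k. [:1, c i:]"
    have e: "(\<Prod>i<Suc k. [:1, c i:]) = ?q + pCons 0 (Polynomial.smult (c k) ?q)"
      by (simp add: mult_pCons_right)
    have "coeff ?q (Suc k) = 0" using Suc by (intro coeff_eq_0) auto
    then have "coeff (\<Prod>i<Suc k. [:1, c i:]) (Suc k) = (\<Prod>i<Suc k. c i)"
      unfolding e using Suc by (simp add: mult.commute)
    moreover have "degree (\<Prod>i<Suc k. [:1, c i:]) \<le> Suc k"
      using Suc by (simp add: e degree_add_le degree_pCons_le order.trans[OF degree_smult_le])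
    ultimately show ?case by simp
  qed simp
  then show ?thesis ..
qed

text \<open>The singular values are recovered from the roots \<open>1 / s i\<^sup>2\<close> of \<open>sval_poly\<close>.\<close>

lemma sval_poly_eq_one_minus_X_power:
  assumes eq: "sval_poly k s = [:1, -1:] ^ r" and kr: "k \<le> r" and s: "\<forall>i<k. s i \<ge> 0"
  shows "k = r" "\<forall>i<k. s i = 1"
proof -
  show kr': "k = r" using degree_sval_poly[of k s] kr by (simp add: eq degree_power_eq)
  have c1: "coeff (sval_poly k s) k = (\<Prod>i<k. - complex_of_real ((s i)\<^sup>2))"
    by (simp add: sval_poly_def coeff_prod_linear_top)
  have c2: "coeff (sval_poly k s) k = (-1) ^ k"
    using eq kr' by (simp add: coeff_one_minus_X_power)
  have top: "(\<Prod>i<k. - complex_of_real ((s i)\<^sup>2)) = (-1) ^ k"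
    by (metis c1 c2)
  show "\<forall>i<k. s i = 1"
  proof (intro allI impI)
    fix i assume i: "i < k"
    have si: "s i \<noteq> 0"
    proof
      assume "s i = 0"
      then have "(\<Prod>i<k. - complex_of_real ((s i)\<^sup>2)) = 0" using i by (intro prod_zero) auto
      then have "(-1 :: complex) ^ k = 0" by (simp only: top)
      then show False by simp
    qed
    let ?a = "complex_of_real (1 / (s i)\<^sup>2)"
    have "poly (sval_poly k s) ?a = 0"
      unfolding poly_sval_poly using i si by (intro prod_zero) (auto intro!: bexI[of _ i] simp flip: of_real_mult)
    then have "(1 - ?a) ^ r = 0" using eq by simp
    then have "?a = 1" using i kr' by simp
    then have "1 / (s i)\<^sup>2 = 1" by (simp only: of_real_eq_1_iff)
    then have "(s i)\<^sup>2 = 1" using si by (simp add: field_simps)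
    then show "s i = 1" using s i by (auto simp: power2_eq_1_iff)
  qed
qed

section \<open>The Shilov boundary of the domains of type I, II and III\<close>

lemma rect_diag_cong: "(\<And>i. i < m \<Longrightarrow> s i = t i) \<Longrightarrow> rect_diag m n s = rect_diag m n t"
  by (rule eq_matI) (auto simp: rect_diag_def)

lemma skew_diag_cong: "(\<And>j. j < k \<Longrightarrow> s j = t j) \<Longrightarrow> skew_diag n k s = skew_diag n k t"
proof (rule eq_matI)
  fix i j assume h: "\<And>j. j < k \<Longrightarrow> s j = t j" "i < dim_row (skew_diag n k t)" "j < dim_col (skew_diag n k t)"
  have "i < 2 * k \<Longrightarrow> i div 2 < k" by auto
  then show "skew_diag n k s $$ (i, j) = skew_diag n k t $$ (i, j)" using h by (auto simp: skew_diag_def)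
qed auto

lemma shilov_boundaryI: "k \<in> cartan_K C \<Longrightarrow> z = k (cartan_e C) \<Longrightarrow> z \<in> shilov_boundary C"
  by (auto simp: shilov_boundary_def)

lemma cartan_e_TypeI: "cartan_e (TypeI m n) = rect_diag m n (\<lambda>_. 1)"
  by (rule eq_matI) (auto simp: rect_diag_def)

lemma cartan_e_TypeIII: "cartan_e (TypeIII n) = rect_diag n n (\<lambda>_. 1)"
  by (rule eq_matI) (auto simp: rect_diag_def)

lemma shilov_boundary_TypeI:
  assumes mn: "m \<le> n"
  shows "shilov_boundary (TypeI m n) = {z \<in> carrier_mat m n. Delta_poly (TypeI m n) z z = [:1, -1:] ^ m}"
proof (intro equalityI subsetI)
  fix z assume "z \<in> shilov_boundary (TypeI m n)"
  then obtain U V where U: "unitary_mat m U" and V: "unitary_mat n V" and z: "z = U * rect_diag m n (\<lambda>_. 1) * V"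
    unfolding shilov_boundary_def cartan_e_TypeI by auto
  have "z \<in> carrier_mat m n"
    using z mult_carrier_mat[OF mult_carrier_mat[OF unitary_carrier[OF U] rect_diag_carrier] unitary_carrier[OF V]]
    by simp
  then show "z \<in> {z \<in> carrier_mat m n. Delta_poly (TypeI m n) z z = [:1, -1:] ^ m}"
    using Delta_poly_TypeI_svd[OF U V mn z] by (simp add: sval_poly_one del: Delta_poly.simps)
next
  fix z assume z: "z \<in> {z \<in> carrier_mat m n. Delta_poly (TypeI m n) z z = [:1, -1:] ^ m}"
  then obtain U V s where U: "unitary_mat m U" and V: "unitary_mat n V" and s: "\<forall>i. s i \<ge> 0"
    and zs: "z = U * rect_diag m n s * V"
    using singular_value_decomposition[OF _ mn] by blast
  have "sval_poly m s = [:1, -1:] ^ m"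
    using z Delta_poly_TypeI_svd[OF U V mn zs] by (simp del: Delta_poly.simps)
  then have "\<forall>i<m. s i = 1"
    using sval_poly_eq_one_minus_X_power(2)[OF _ le_refl] s by blast
  then have "z = U * cartan_e (TypeI m n) * V"
    unfolding cartan_e_TypeI using zs rect_diag_cong[of m s "\<lambda>_. 1" n] by simp
  then show "z \<in> shilov_boundary (TypeI m n)"
    using U V by (intro shilov_boundaryI[of "\<lambda>x. U * x * V"]) auto
qed

lemma Delta_poly_TypeI_normalized:
  assumes "z \<in> carrier_mat m n" "m \<le> n"
  shows "degree (Delta_poly (TypeI m n) z z) \<le> m \<and> coeff (Delta_poly (TypeI m n) z z) 0 = 1"
proof -
  obtain U V s where "unitary_mat m U" "unitary_mat n V" "z = U * rect_diag m n s * V"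
    using singular_value_decomposition[OF assms] by blast
  then show ?thesis
    using Delta_poly_TypeI_svd assms(2) degree_sval_poly coeff_0_sval_poly by metis
qed

lemma transpose_mult_transpose:
  fixes U D :: "'a :: comm_ring_1 mat"
  assumes U: "U \<in> carrier_mat n n" and D: "D \<in> carrier_mat n n"
  shows "transpose_mat (U * D * transpose_mat U) = U * transpose_mat D * transpose_mat U"
  using U D by (simp add: transpose_mult[of _ n n _ n] assoc_mult_mat[of _ n n _ n _ n])

lemma transpose_rect_diag: "transpose_mat (rect_diag n n s) = rect_diag n n s"
  by (rule eq_matI) (auto simp: rect_diag_def)

lemma shilov_boundary_TypeIII:
  shows "shilov_boundary (TypeIII n) = {z \<in> cartan_space (TypeIII n). Delta_poly (TypeIII n) z z = [:1, -1:] ^ n}"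
proof (intro equalityI subsetI)
  fix z assume "z \<in> shilov_boundary (TypeIII n)"
  then obtain U where U: "unitary_mat n U" and z: "z = U * rect_diag n n (\<lambda>_. 1) * transpose_mat U"
    unfolding shilov_boundary_def cartan_e_TypeIII by auto
  have cU: "U \<in> carrier_mat n n" using unitary_carrier[OF U] .
  have "z \<in> carrier_mat n n"
    using z mult_carrier_mat[OF mult_carrier_mat[OF cU rect_diag_carrier] transpose_carrier_mat[THEN iffD2, OF cU]]
    by simp
  moreover have "transpose_mat z = z"
    using transpose_mult_transpose[OF cU rect_diag_carrier] z by (simp add: transpose_rect_diag)
  ultimately show "z \<in> {z \<in> cartan_space (TypeIII n). Delta_poly (TypeIII n) z z = [:1, -1:] ^ n}"
    using Delta_poly_TypeIII_takagi[OF U z] by (simp add: sval_poly_one del: Delta_poly.simps)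
next
  fix z assume z: "z \<in> {z \<in> cartan_space (TypeIII n). Delta_poly (TypeIII n) z z = [:1, -1:] ^ n}"
  then obtain U s where U: "unitary_mat n U" and s: "\<forall>i. s i \<ge> 0"
    and zs: "z = U * rect_diag n n s * transpose_mat U"
    using takagi_factorization[of z n] by auto
  have "sval_poly n s = [:1, -1:] ^ n"
    using z Delta_poly_TypeIII_takagi[OF U zs] by (simp del: Delta_poly.simps)
  then have "\<forall>i<n. s i = 1"
    using sval_poly_eq_one_minus_X_power(2)[OF _ le_refl] s by blast
  then have "z = U * cartan_e (TypeIII n) * transpose_mat U"
    unfolding cartan_e_TypeIII using zs rect_diag_cong[of n s "\<lambda>_. 1" n] by simp
  then show "z \<in> shilov_boundary (TypeIII n)"
    using U by (intro shilov_boundaryI[of "\<lambda>x. U * x * transpose_mat U"]) auto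
qed

lemma cartan_e_TypeII_skew: "transpose_mat (cartan_e (TypeII n)) = - cartan_e (TypeII n)"
  by (rule eq_matI) auto

lemma shilov_boundary_TypeII:
  shows "shilov_boundary (TypeII n) =
    {z \<in> cartan_space (TypeII n). Delta_poly (TypeII n) z z = [:1, -1:] ^ (n div 2)}"
proof (intro equalityI subsetI)
  fix z assume "z \<in> shilov_boundary (TypeII n)"
  then obtain U where U: "unitary_mat n U" and z: "z = U * cartan_e (TypeII n) * transpose_mat U"
    unfolding shilov_boundary_def by auto
  have cU: "U \<in> carrier_mat n n" using unitary_carrier[OF U] .
  have ce: "cartan_e (TypeII n) \<in> carrier_mat n n" by simp
  have "z \<in> carrier_mat n n"
    using z mult_carrier_mat[OF mult_carrier_mat[OF cU ce] transpose_carrier_mat[THEN iffD2, OF cU]]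
    by simp
  moreover have "transpose_mat z = - z"
    using transpose_mult_transpose[OF cU ce] z cU ce
    by (simp add: cartan_e_TypeII_skew uminus_mult_left_mat uminus_mult_right_mat del: cartan_e.simps)
  moreover have "Delta_poly (TypeII n) z z = [:1, -1:] ^ (n div 2)"
    using Delta_poly_TypeII_youla[OF U _ z[unfolded cartan_e_TypeII]] by (simp add: sval_poly_one)
  ultimately show "z \<in> {z \<in> cartan_space (TypeII n). Delta_poly (TypeII n) z z = [:1, -1:] ^ (n div 2)}"
    by simp
next
  fix z assume z: "z \<in> {z \<in> cartan_space (TypeII n). Delta_poly (TypeII n) z z = [:1, -1:] ^ (n div 2)}"
  then obtain U k s where U: "unitary_mat n U" and kn: "2 * k \<le> n" and s: "\<forall>j. s j > 0"
    and zs: "z = U * skew_diag n k s * transpose_mat U"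
    using youla_decomposition[of z n] by auto
  have "sval_poly k s = [:1, -1:] ^ (n div 2)"
    using z Delta_poly_TypeII_youla[OF U kn zs] by (simp del: Delta_poly.simps)
  then have k: "k = n div 2" and "\<forall>i<k. s i = 1"
    using sval_poly_eq_one_minus_X_power[of k s "n div 2"] kn s by (auto simp: less_imp_le)
  then have "z = U * cartan_e (TypeII n) * transpose_mat U"
    unfolding cartan_e_TypeII using zs skew_diag_cong[of k s "\<lambda>_. 1" n] by simp
  then show "z \<in> shilov_boundary (TypeII n)"
    using U by (intro shilov_boundaryI[of "\<lambda>x. U * x * transpose_mat U"]) auto
qed

lemma Delta_poly_TypeII_normalized:
  assumes "z \<in> carrier_mat n n" "transpose_mat z = - z"
  shows "degree (Delta_poly (TypeII n) z z) \<le> n div 2 \<and> coeff (Delta_poly (TypeII n) z z) 0 = 1"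
proof -
  obtain U k s where "unitary_mat n U" "2 * k \<le> n" "z = U * skew_diag n k s * transpose_mat U"
    using youla_decomposition[OF assms] by blast
  moreover have "2 * k \<le> n \<Longrightarrow> k \<le> n div 2" by simp
  ultimately show ?thesis
    using Delta_poly_TypeII_youla degree_sval_poly coeff_0_sval_poly order.trans by metis
qed

lemma Delta_poly_TypeIII_normalized:
  assumes "z \<in> carrier_mat n n" "transpose_mat z = z"
  shows "degree (Delta_poly (TypeIII n) z z) \<le> n \<and> coeff (Delta_poly (TypeIII n) z z) 0 = 1"
proof -
  obtain U s where "unitary_mat n U" "z = U * rect_diag n n s * transpose_mat U"
    using takagi_factorization[OF assms] by blast
  then show ?thesis
    using Delta_poly_TypeIII_takagi degree_sval_poly coeff_0_sval_poly by metis
qed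

section \<open>The Lie ball\<close>

text \<open>The reflection in the hyperplane orthogonal to \<open>w\<close>. For \<open>w = 0\<close> the division by zero makes it the
  identity, so the lemmas below need no side condition on \<open>w\<close>.\<close>

definition householder :: "nat \<Rightarrow> (nat \<Rightarrow> real) \<Rightarrow> real mat" where
  "householder n w = mat n n (\<lambda>(i,j). (if i = j then 1 else 0) - 2 * w i * w j / (\<Sum>k<n. (w k)\<^sup>2))"

lemma transpose_householder: "transpose_mat (householder n w) = householder n w"
  by (rule eq_matI) (auto simp: householder_def mult.commute)

lemma householder_square: "householder n w * householder n w = 1\<^sub>m n"
proof (rule eq_matI)
  fix i j assume "i < dim_row (1\<^sub>m n :: real mat)" "j < dim_col (1\<^sub>m n :: real mat)"
  then have ij: "i < n" "j < n" by auto
  define nw where "nw = (\<Sum>k<n. (w k)\<^sup>2)"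
  have "(householder n w * householder n w) $$ (i,j) =
      (\<Sum>k<n. ((if i = k then 1 else 0) - 2 * w i * w k / nw) * ((if k = j then 1 else 0) - 2 * w k * w j / nw))"
    using ij unfolding householder_def nw_def[symmetric] by (simp add: scalar_prod_def lessThan_atLeast0)
  also have "\<dots> = (\<Sum>k<n. (if i = k then 1 else 0) * (if k = j then 1 else 0))
      - (\<Sum>k<n. (if i = k then 1 else 0) * (2 * w k * w j / nw))
      - (\<Sum>k<n. (2 * w i * w k / nw) * (if k = j then 1 else 0))
      + (\<Sum>k<n. (2 * w i * w k / nw) * (2 * w k * w j / nw))"
    by (simp add: algebra_simps sum.distrib sum_subtractf)
  also have "(\<Sum>k<n. (if i = k then 1 else 0) * (if k = j then 1 else (0::real))) = (if i = j then 1 else 0)"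
    using ij by (simp add: if_distrib[of "\<lambda>a. a * _"] cong: if_cong)
  also have "(\<Sum>k<n. (if i = k then 1 else 0) * (2 * w k * w j / nw)) = 2 * w i * w j / nw"
  proof -
    have "(\<Sum>k<n. (if i = k then 1 else 0) * (2 * w k * w j / nw)) = (\<Sum>k<n. if k = i then 2 * w i * w j / nw else 0)"
      by (intro sum.cong refl) auto
    then show ?thesis using ij by simp
  qed
  also have "(\<Sum>k<n. (2 * w i * w k / nw) * (if k = j then 1 else 0)) = 2 * w i * w j / nw"
    using ij by (simp add: if_distrib[of "\<lambda>a. _ * a"] cong: if_cong)
  also have "(\<Sum>k<n. (2 * w i * w k / nw) * (2 * w k * w j / nw)) = 4 * w i * w j * nw / (nw * nw)"
    unfolding nw_def
    by (simp add: sum_divide_distrib[symmetric] sum_distrib_left sum_distrib_right power2_eq_square algebra_simps)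
  also have "(if i = j then 1 else 0) - 2 * w i * w j / nw - 2 * w i * w j / nw + 4 * w i * w j * nw / (nw * nw)
      = (if i = j then 1 else (0::real))"
    by (cases "nw = 0") (auto simp: field_simps)
  finally show "(householder n w * householder n w) $$ (i,j) = 1\<^sub>m n $$ (i,j)" using ij by simp
qed (auto simp: householder_def)

lemma householder_first_col:
  assumes x: "(\<Sum>i<n. (x i)\<^sup>2) = 1" and i: "i < n"
  defines "w \<equiv> \<lambda>k. (if k = 0 then 1 else 0) - x k"
  shows "householder n w $$ (i,0) = x i"
proof -
  define nw where "nw = (\<Sum>k<n. (w k)\<^sup>2)"
  have n: "0 < n" using i by simp
  have nw: "nw = 2 * (1 - x 0)"
  proof -
    have "nw = (\<Sum>i<n. (if i = 0 then 1 else 0) - (if i = 0 then 2 * x 0 else 0) + (x i)\<^sup>2)"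
      unfolding nw_def w_def by (intro sum.cong refl) (auto simp: power2_eq_square algebra_simps)
    also have "\<dots> = 1 - 2 * x 0 + 1" using n x by (simp add: sum.distrib sum_subtractf)
    finally show ?thesis by simp
  qed
  show ?thesis
  proof (cases "nw = 0")
    case True
    then have "\<forall>k\<in>{..<n}. (w k)\<^sup>2 = 0" unfolding nw_def by (subst sum_nonneg_eq_0_iff[symmetric]) auto
    then have "w i = 0" using i by auto
    then show ?thesis using i n True unfolding householder_def nw_def[symmetric] w_def by auto
  next
    case False
    have "householder n w $$ (i,0) = (if i = 0 then 1 else 0) - 2 * w i * w 0 / nw"
      unfolding householder_def nw_def[symmetric] using i n by simp
    also have "2 * w 0 / nw = 1" using False unfolding nw w_def by auto
    then have "2 * w i * w 0 / nw = w i" by (metis mult.commute mult.left_commute times_divide_eq_right mult_1_right)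
    finally show ?thesis unfolding w_def by simp
  qed
qed

lemma orthogonal_mult: fixes H R :: "real mat"
  assumes H: "H \<in> carrier_mat n n" and R: "R \<in> carrier_mat n n"
  and HH: "H * transpose_mat H = 1\<^sub>m n" and RR: "R * transpose_mat R = 1\<^sub>m n"
  shows "(H * R) * transpose_mat (H * R) = 1\<^sub>m n"
proof -
  have HT: "transpose_mat H \<in> carrier_mat n n" and RT: "transpose_mat R \<in> carrier_mat n n" using H R by auto
  have RTHT: "transpose_mat R * transpose_mat H \<in> carrier_mat n n" using RT HT by simp
  have "transpose_mat (H * R) = transpose_mat R * transpose_mat H" by (rule transpose_mult[OF H R])
  moreover have "(H * R) * (transpose_mat R * transpose_mat H) = H * (R * (transpose_mat R * transpose_mat H))"
    by (rule assoc_mult_mat[OF H R RTHT])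
  moreover have "R * (transpose_mat R * transpose_mat H) = (R * transpose_mat R) * transpose_mat H"
    by (rule assoc_mult_mat[OF R RT HT, symmetric])
  ultimately show ?thesis using RR HH HT by simp
qed

lemma sign_flip_last:
  fixes n :: nat
  assumes n: "2 \<le> n"
  defines "R \<equiv> mat n n (\<lambda>(i,j). if i = j then (if i = n - 1 then -1 else 1) else 0) :: real mat"
  shows "R \<in> carrier_mat n n" "R * transpose_mat R = 1\<^sub>m n" "det R = -1"
    "\<And>H i. H \<in> carrier_mat n n \<Longrightarrow> i < n \<Longrightarrow> (H * R) $$ (i,0) = H $$ (i,0)"
proof -
  show R: "R \<in> carrier_mat n n" unfolding R_def by simp
  have RT: "transpose_mat R = R" unfolding R_def by (rule eq_matI) auto
  show "R * transpose_mat R = 1\<^sub>m n"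
  proof (rule eq_matI)
    fix i j assume "i < dim_row (1\<^sub>m n :: real mat)" "j < dim_col (1\<^sub>m n :: real mat)"
    then have ij: "i < n" "j < n" by auto
    have "(R * transpose_mat R) $$ (i,j) = (\<Sum>k<n. R $$ (i,k) * R $$ (k,j))"
      using ij unfolding RT by (simp add: scalar_prod_def lessThan_atLeast0 R_def)
    also have "\<dots> = (\<Sum>k<n. if k = i then (if i = j then 1 else 0) else 0)"
      using ij by (intro sum.cong refl) (auto simp: R_def)
    finally show "(R * transpose_mat R) $$ (i,j) = 1\<^sub>m n $$ (i,j)" using ij by simp
  qed (auto simp: R_def)
  have "det R = (\<Prod>i<n. if i = n - 1 then -1 else 1)"
    unfolding R_def by (rule det_diag_mat)
  also have "\<dots> = -1" using n by (simp add: prod.If_cases)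
  finally show "det R = -1" .
  show "(H * R) $$ (i,0) = H $$ (i,0)" if H: "H \<in> carrier_mat n n" and i: "i < n" for H i
  proof -
    have "(H * R) $$ (i,0) = (\<Sum>k<n. H $$ (i,k) * R $$ (k,0))"
      using i n H R by (simp add: scalar_prod_def lessThan_atLeast0)
    also have "\<dots> = (\<Sum>k<n. if k = 0 then H $$ (i,0) else 0)"
      using n by (intro sum.cong refl) (auto simp: R_def)
    finally show ?thesis using n by simp
  qed
qed

text \<open>A Householder reflection moves the first basis vector to \<open>x\<close>; if its determinant is \<open>-1\<close>,
  flipping the last column fixes this without moving the first one.\<close>

lemma exists_SO_first_col:
  fixes x :: "nat \<Rightarrow> real"
  assumes n: "2 \<le> n" and x: "(\<Sum>i<n. (x i)\<^sup>2) = 1"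
  obtains B :: "real mat" where "B \<in> carrier_mat n n" "B * transpose_mat B = 1\<^sub>m n" "det B = 1"
    "\<forall>i<n. B $$ (i,0) = x i"
proof -
  define H where "H = householder n (\<lambda>k. (if k = 0 then 1 else 0) - x k)"
  have H: "H \<in> carrier_mat n n" "H * transpose_mat H = 1\<^sub>m n" "\<forall>i<n. H $$ (i,0) = x i"
    unfolding H_def transpose_householder
    by (simp add: householder_def) (rule householder_square, simp add: householder_first_col[OF x])
  have "det H * det H = 1"
    using det_mult[OF H(1) transpose_carrier_mat[THEN iffD2, OF H(1)]] H(2) det_transpose[OF H(1)] by simp
  then have "det H = 1 \<or> det H = -1"
    by (simp add: power2_eq_1_iff flip: power2_eq_square)
  then show ?thesis
  proof
    assume "det H = 1"
    then show ?thesis using that H by blast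
  next
    assume dH: "det H = -1"
    define R :: "real mat" where "R = mat n n (\<lambda>(i,j). if i = j then (if i = n - 1 then -1 else 1) else 0)"
    note R = sign_flip_last[OF n, folded R_def]
    show ?thesis
    proof (rule that[of "H * R"])
      show "H * R \<in> carrier_mat n n" using H(1) R(1) by (rule mult_carrier_mat)
      show "(H * R) * transpose_mat (H * R) = 1\<^sub>m n" by (rule orthogonal_mult[OF H(1) R(1) H(2) R(2)])
      show "det (H * R) = 1" using det_mult[OF H(1) R(1)] dH R(3) by simp
      show "\<forall>i<n. (H * R) $$ (i,0) = x i" using H R(4)[OF H(1)] by simp
    qed
  qed
qed

lemma Delta_poly_TypeIV_eq_one_minus_X_power_iff:
  "Delta_poly (TypeIV n) z z = [:1, -1:] ^ 2 \<longleftrightarrow> sesq z z = 1 \<and> qform z * cnj (qform z) = 1"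
  by (auto simp: numeral_2_eq_2)

lemma Delta_poly_TypeIV_normalized:
  "degree (Delta_poly (TypeIV n) z z) \<le> 2 \<and> coeff (Delta_poly (TypeIV n) z z) 0 = 1"
  by (simp add: degree_pCons_le)

text \<open>Equality in \<open>\<bar>\<Sum> u i\<^sup>2\<bar> \<le> \<Sum> \<bar>u i\<bar>\<^sup>2\<close> forces \<open>u\<close> to be real.\<close>

lemma sum_squares_eq_sum_cmod_squares_imp_real:
  fixes u :: "nat \<Rightarrow> complex"
  assumes sq: "(\<Sum>i<n. (u i)\<^sup>2) = 1" and norm: "(\<Sum>i<n. u i * cnj (u i)) = 1" and i: "i < n"
  shows "Im (u i) = 0"
proof -
  have re1: "(\<Sum>i<n. (Re (u i))\<^sup>2 - (Im (u i))\<^sup>2) = 1"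
    using arg_cong[OF sq, of Re] by (simp add: Re_sum power2_eq_square)
  have re2: "(\<Sum>i<n. (Re (u i))\<^sup>2 + (Im (u i))\<^sup>2) = 1"
    using arg_cong[OF norm, of Re] by (simp add: Re_sum power2_eq_square)
  have "(\<Sum>i<n. (Re (u i))\<^sup>2 + (Im (u i))\<^sup>2) - (\<Sum>i<n. (Re (u i))\<^sup>2 - (Im (u i))\<^sup>2)
      = 2 * (\<Sum>i<n. (Im (u i))\<^sup>2)"
    by (simp add: sum_subtractf[symmetric] sum_distrib_left)
  then have "(\<Sum>i<n. (Im (u i))\<^sup>2) = 0" using re1 re2 by simp
  then have "\<forall>i\<in>{..<n}. (Im (u i))\<^sup>2 = 0"
    by (subst sum_nonneg_eq_0_iff[symmetric]) auto
  then show ?thesis using i by simp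
qed

lemma lie_sphere_polar:
  assumes z: "z \<in> carrier_mat n 1" and ss: "sesq z z = 1" and qq: "qform z * cnj (qform z) = 1"
  obtains c x where "cmod c = 1" "(\<Sum>i<n. (x i)\<^sup>2) = 1" "\<forall>i<n. z $$ (i,0) = c * complex_of_real (x i)"
proof -
  define q where "q = qform z"
  define c where "c = csqrt q"
  have c2: "c\<^sup>2 = q" unfolding c_def by simp
  have "complex_of_real ((cmod q)\<^sup>2) = q * cnj q" by (rule complex_norm_square)
  then have "complex_of_real ((cmod q)\<^sup>2) = 1" using qq unfolding q_def by simp
  then have "(cmod q)\<^sup>2 = 1" by (metis of_real_1 of_real_eq_iff)
  then have mq: "cmod q = 1" using norm_ge_zero[of q] by (auto simp: power2_eq_1_iff)
  have "(cmod c)\<^sup>2 = 1" using c2 mq by (metis norm_power)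
  then have mc: "cmod c = 1" using norm_ge_zero[of c] by (auto simp: power2_eq_1_iff)
  then have c0: "c \<noteq> 0" by auto
  have cc: "c * cnj c = 1" using mc by (metis complex_norm_square mult.commute of_real_1 power_one)
  define u where "u i = z $$ (i,0) / c" for i
  have zu: "z $$ (i,0) = c * u i" for i unfolding u_def using c0 by simp
  have dz: "dim_row z = n" using z by simp
  have "q = c\<^sup>2 * (\<Sum>i<n. (u i)\<^sup>2)"
    unfolding q_def qform_def dz zu by (simp add: power_mult_distrib sum_distrib_left)
  then have su2: "(\<Sum>i<n. (u i)\<^sup>2) = 1" using c2 c0 mq by auto
  have "sesq z z = (c * cnj c) * (\<Sum>i<n. u i * cnj (u i))"
    unfolding sesq_def dz zu by (simp add: sum_distrib_left algebra_simps)
  then have suu: "(\<Sum>i<n. u i * cnj (u i)) = 1" using ss cc by simp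
  define x where "x i = Re (u i)" for i
  have ux: "u i = complex_of_real (x i)" if "i < n" for i
    using sum_squares_eq_sum_cmod_squares_imp_real[OF su2 suu that] unfolding x_def by (simp add: complex_eq_iff)
  have "complex_of_real (\<Sum>i<n. (x i)\<^sup>2) = (\<Sum>i<n. (u i)\<^sup>2)"
    using ux by (auto simp: of_real_sum intro!: sum.cong)
  then have "(\<Sum>i<n. (x i)\<^sup>2) = 1" using su2 by (metis of_real_eq_1_iff)
  then show ?thesis using that mc ux zu by simp
qed

lemma lie_sphere_of_polar:
  assumes z: "z \<in> carrier_mat n 1" and c: "cmod c = 1" and x: "(\<Sum>i<n. (x i)\<^sup>2) = 1"
    and zx: "\<forall>i<n. z $$ (i,0) = c * complex_of_real (x i)"
  shows "sesq z z = 1 \<and> qform z * cnj (qform z) = 1"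
proof -
  have cc: "c * cnj c = 1" using c by (metis complex_norm_square mult.commute of_real_1 power_one)
  have "sesq z z = (\<Sum>i<n. (c * cnj c) * complex_of_real ((x i)\<^sup>2))"
    unfolding sesq_def using z zx by (intro sum.cong) (auto simp: power2_eq_square algebra_simps)
  also have "\<dots> = complex_of_real (\<Sum>i<n. (x i)\<^sup>2)" unfolding cc by simp
  finally have ss: "sesq z z = 1" using x by simp
  have "qform z = (\<Sum>i<n. c\<^sup>2 * complex_of_real ((x i)\<^sup>2))"
    unfolding qform_def using z zx by (intro sum.cong) (auto simp: power2_eq_square algebra_simps)
  also have "\<dots> = c\<^sup>2 * complex_of_real (\<Sum>i<n. (x i)\<^sup>2)" by (simp add: sum_distrib_left)
  finally have "qform z = c\<^sup>2" using x by simp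
  then have "qform z * cnj (qform z) = (c * cnj c)\<^sup>2" by (simp add: power2_eq_square algebra_simps)
  then show ?thesis using ss unfolding cc by simp
qed

lemma SO_mult_cartan_e_TypeIV: fixes B :: "real mat" assumes B: "B \<in> carrier_mat n n" and i: "i < n"
  shows "(map_mat complex_of_real B * cartan_e (TypeIV n)) $$ (i,0) = complex_of_real (B $$ (i,0))"
proof -
  have "(map_mat complex_of_real B * cartan_e (TypeIV n)) $$ (i,0) = (\<Sum>k<n. complex_of_real (B $$ (i,k)) * (if k = 0 then 1 else 0))"
    using B i by (simp add: scalar_prod_def row_def col_def lessThan_atLeast0)
  also have "\<dots> = (\<Sum>k<n. if k = 0 then complex_of_real (B $$ (i,0)) else 0)" by (intro sum.cong refl, auto)
  also have "\<dots> = complex_of_real (B $$ (i,0))" using i by simp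
  finally show ?thesis .
qed

lemma orthogonal_first_col_norm: fixes B :: "real mat" assumes B: "B \<in> carrier_mat n n" and BB: "B * transpose_mat B = 1\<^sub>m n" and n: "n > 0"
  shows "(\<Sum>i<n. (B $$ (i,0))\<^sup>2) = 1"
proof -
  have BT: "transpose_mat B \<in> carrier_mat n n" using B by simp
  have "transpose_mat B * B = 1\<^sub>m n" using mat_mult_left_right_inverse[OF B BT BB] .
  then have "(transpose_mat B * B) $$ (0,0) = 1" using n by simp
  moreover have "(transpose_mat B * B) $$ (0,0) = (\<Sum>i<n. (B $$ (i,0))\<^sup>2)"
    using B n by (simp add: scalar_prod_def row_def col_def lessThan_atLeast0 power2_eq_square)
  ultimately show ?thesis by simp
qed

lemma shilov_boundary_TypeIV_polar:
  assumes n: "2 \<le> n"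
  shows "z \<in> shilov_boundary (TypeIV n) \<longleftrightarrow> z \<in> carrier_mat n 1 \<and>
    (\<exists>c x. cmod c = 1 \<and> (\<Sum>i<n. (x i)\<^sup>2) = 1 \<and> (\<forall>i<n. z $$ (i,0) = c * complex_of_real (x i)))"
proof
  assume "z \<in> shilov_boundary (TypeIV n)"
  then obtain c A where c: "cmod c = 1" and A: "SO_mat n A" and z: "z = c \<cdot>\<^sub>m (A * cartan_e (TypeIV n))"
    unfolding shilov_boundary_def by auto
  obtain B :: "real mat" where B: "B \<in> carrier_mat n n" "B * transpose_mat B = 1\<^sub>m n"
    and AB: "A = map_mat complex_of_real B"
    using A unfolding SO_mat_def by auto
  have "z \<in> carrier_mat n 1" using z B(1) AB by simp
  moreover have "\<forall>i<n. z $$ (i,0) = c * complex_of_real (B $$ (i,0))"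
    using z B AB SO_mult_cartan_e_TypeIV[OF B(1)] by simp
  moreover have "(\<Sum>i<n. (B $$ (i,0))\<^sup>2) = 1" using orthogonal_first_col_norm[OF B] n by simp
  ultimately show "z \<in> carrier_mat n 1 \<and>
      (\<exists>c x. cmod c = 1 \<and> (\<Sum>i<n. (x i)\<^sup>2) = 1 \<and> (\<forall>i<n. z $$ (i,0) = c * complex_of_real (x i)))"
    using c by (intro conjI exI[of _ c] exI[of _ "\<lambda>i. B $$ (i,0)"]) simp_all
next
  assume "z \<in> carrier_mat n 1 \<and>
    (\<exists>c x. cmod c = 1 \<and> (\<Sum>i<n. (x i)\<^sup>2) = 1 \<and> (\<forall>i<n. z $$ (i,0) = c * complex_of_real (x i)))"
  then obtain c x where z: "z \<in> carrier_mat n 1" and c: "cmod c = 1" and x: "(\<Sum>i<n. (x i)\<^sup>2) = 1"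
    and zx: "\<forall>i<n. z $$ (i,0) = c * complex_of_real (x i)" by blast
  obtain B :: "real mat" where B: "B \<in> carrier_mat n n" "B * transpose_mat B = 1\<^sub>m n" "det B = 1"
    "\<forall>i<n. B $$ (i,0) = x i"
    using exists_SO_first_col[OF n x] by blast
  define A where "A = map_mat complex_of_real B"
  have "z = c \<cdot>\<^sub>m (A * cartan_e (TypeIV n))"
  proof (rule eq_matI)
    fix i j assume "i < dim_row (c \<cdot>\<^sub>m (A * cartan_e (TypeIV n)))" "j < dim_col (c \<cdot>\<^sub>m (A * cartan_e (TypeIV n)))"
    then have i: "i < n" and j: "j = 0" unfolding A_def using B(1) by auto
    show "z $$ (i, j) = (c \<cdot>\<^sub>m (A * cartan_e (TypeIV n))) $$ (i, j)"
      using i j B SO_mult_cartan_e_TypeIV[OF B(1) i] zx unfolding A_def by simp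
  qed (use z B(1) in \<open>auto simp: A_def\<close>)
  moreover have "SO_mat n A" unfolding SO_mat_def A_def using B by auto
  ultimately show "z \<in> shilov_boundary (TypeIV n)"
    using c by (intro shilov_boundaryI[of "\<lambda>w. c \<cdot>\<^sub>m (A * w)"]) auto
qed

lemma shilov_boundary_TypeIV:
  assumes "2 \<le> n"
  shows "shilov_boundary (TypeIV n) = {z \<in> carrier_mat n 1. Delta_poly (TypeIV n) z z = [:1, -1:] ^ 2}"
proof -
  have polar_iff: "(\<exists>c x. cmod c = 1 \<and> (\<Sum>i<n. (x i)\<^sup>2) = 1 \<and> (\<forall>i<n. z $$ (i,0) = c * complex_of_real (x i)))
      \<longleftrightarrow> sesq z z = 1 \<and> qform z * cnj (qform z) = 1" if z: "z \<in> carrier_mat n 1" for z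
  proof
    assume "\<exists>c x. cmod c = 1 \<and> (\<Sum>i<n. (x i)\<^sup>2) = 1 \<and> (\<forall>i<n. z $$ (i,0) = c * complex_of_real (x i))"
    then show "sesq z z = 1 \<and> qform z * cnj (qform z) = 1"
      using lie_sphere_of_polar[OF z] by blast
  next
    assume "sesq z z = 1 \<and> qform z * cnj (qform z) = 1"
    then obtain c x where "cmod c = 1" "(\<Sum>i<n. (x i)\<^sup>2) = 1" "\<forall>i<n. z $$ (i,0) = c * complex_of_real (x i)"
      using lie_sphere_polar[OF z] by blast
    then show "\<exists>c x. cmod c = 1 \<and> (\<Sum>i<n. (x i)\<^sup>2) = 1 \<and> (\<forall>i<n. z $$ (i,0) = c * complex_of_real (x i))"
      by blast
  qed
  have "z \<in> shilov_boundary (TypeIV n) \<longleftrightarrow> z \<in> carrier_mat n 1 \<and> Delta_poly (TypeIV n) z z = [:1, -1:] ^ 2" for z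
    unfolding shilov_boundary_TypeIV_polar[OF assms] Delta_poly_TypeIV_eq_one_minus_X_power_iff
    using polar_iff by blast
  then show ?thesis by blast
qed

lemma shilov_boundary_eq_Delta_poly:
  assumes "valid_cartan C"
  shows "shilov_boundary C = {z \<in> cartan_space C. Delta_poly C z z = [:1, -1:] ^ cartan_rank C}"
  using assms
  by (cases C) (simp_all add: shilov_boundary_TypeI shilov_boundary_TypeII shilov_boundary_TypeIII
      shilov_boundary_TypeIV del: Delta_poly.simps)

lemma Delta_poly_normalized:
  assumes "valid_cartan C" "z \<in> cartan_space C"
  shows "degree (Delta_poly C z z) \<le> cartan_rank C \<and> coeff (Delta_poly C z z) 0 = 1"
  using assms
  by (cases C) (simp_all add: Delta_poly_TypeI_normalized Delta_poly_TypeII_normalized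
      Delta_poly_TypeIII_normalized Delta_poly_TypeIV_normalized del: Delta_poly.simps)

theorem lemma2p1:
  fixes C :: cartan_type
  assumes "valid_cartan C"
  shows "shilov_boundary C =
    {z \<in> cartan_space C. \<forall>l. 1 \<le> l \<and> l \<le> cartan_rank C \<longrightarrow>
        Delta_comp C l z z = of_nat (cartan_rank C choose l)}"
proof -
  have "Delta_poly C z z = [:1, -1:] ^ cartan_rank C \<longleftrightarrow>
      (\<forall>l. 1 \<le> l \<and> l \<le> cartan_rank C \<longrightarrow> Delta_comp C l z z = of_nat (cartan_rank C choose l))"
    if "z \<in> cartan_space C" for z
    using eq_one_minus_X_power_iff Delta_poly_normalized[OF assms that] unfolding Delta_comp_def by blast
  then show ?thesis
    unfolding shilov_boundary_eq_Delta_poly[OF assms] by blast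
qed

end
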